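(* With $n=3$, $m=1$ and constant coefficients, consider the second order system $R_2$: $\Phi^3\equiv y_{33}=0$, $\Phi^2\equiv y_{23}-y_{11}=0$, $\Phi^1\equiv y_{22}=0$. Then $R_2$ is formally integrable; its symbols $g_2,g_3$ are not involutive; $g_4=0$; $\dim g_3=1$; the map $\delta:\wedge^2T^*\otimes g_3\to\wedge^3T^*\otimes g_2$ is an isomorphism between $3$-dimensional spaces, so $g_3$ is $2$-acyclic. With the commuting operators $P=d_{22}$, $Q=d_{23}-d_{11}$, $R=d_{33}$, the compatibility conditions of $y\mapsto(\Phi^1,\Phi^2,\Phi^3)=(Py,Qy,Ry)$ are generated by the three second order conditions $\Psi^3\equiv P\Phi^2-Q\Phi^1=0$, $\Psi^2\equiv R\Phi^1-P\Phi^3=0$, $\Psi^1\equiv Q\Phi^3-R\Phi^2=0$, whose compatibility conditions are generated by the single second order condition $P\Psi^1+Q\Psi^2+R\Psi^3=0$; this yields a formally exact sequence $0\to\Theta\to1\to3\to3\to1\to0$ (numbers of unknowns/equations). Moreover the symbol $h_2=\mathrm{im}\,\sigma_2(\Phi)$ is not $2$-acyclic while its prolongation $h_3$ is $2$-acyclic.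
   Context: $g_{2+r}$ denotes the symbol of order $2+r$: the space of $v_\mu$, $|\mu|=2+r$, satisfying $v_{33+\nu}=0$, $v_{23+\nu}-v_{11+\nu}=0$, $v_{22+\nu}=0$ for $|\nu|=r$. The Spencer map is $(\delta\omega)_\mu=dx^i\wedge\omega_{\mu+1_i}$; $s$-acyclicity means vanishing of the $\delta$-cohomology at $\wedge^jT^*\otimes(\cdot)$ for $1\le j\le s$ and all prolongations. $h_{t}=\mathrm{im}(S_{2+t}T^*\to S_tT^*\otimes\mathbb{R}^3)$ is the image of the symbol map of $\Phi$. A differential sequence is formally exact if each operator generates the compatibility conditions of the preceding one. *)

theory Defs
  imports "HOL-Analysis.Analysis" "HOL-Library.Poly_Mapping" "HOL-Library.Product_Plus" "HOL-Library.Function_Algebras"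
begin

text \<open>A multi-index mu = (mu1, mu2, mu3); the variable x^i (i = 1,2,3) corresponds to
  the index i-1 in {0,1,2}.\<close>

type_synonym mi = "nat \<times> nat \<times> nat"

fun mdeg :: "mi \<Rightarrow> nat" where
  "mdeg (a, b, c) = a + b + c"

definition unit_mi :: "nat \<Rightarrow> mi" where
  "unit_mi i = (if i = 0 then (1, 0, 0) else if i = 1 then (0, 1, 0) else (0, 0, 1))"

text \<open>The commutative ring D = R[d_1,d_2,d_3] of linear differential operators with constant
  coefficients, as polynomials in the formal derivations; d_mu is the monomial with exponent mu.\<close>

type_synonym D = "mi \<Rightarrow>\<^sub>0 real"

definition dop :: "mi \<Rightarrow> D" where
  "dop \<mu> = Poly_Mapping.single \<mu> 1"

text \<open>An operator matrix with p rows (equations) and m columns (unknowns) is a list of p rows,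
  each a list of m elements of D.\<close>

definition is_matrix :: "nat \<Rightarrow> nat \<Rightarrow> D list list \<Rightarrow> bool" where
  "is_matrix p m A \<longleftrightarrow> length A = p \<and> (\<forall>row \<in> set A. length row = m)"

definition rowmul :: "D list \<Rightarrow> D list list \<Rightarrow> nat \<Rightarrow> D list" where
  "rowmul l B n = map (\<lambda>k. \<Sum>i<length B. l ! i * (B ! i ! k)) [0..<n]"

definition generates_cc :: "D list list \<Rightarrow> D list list \<Rightarrow> nat \<Rightarrow> bool" where
  "generates_cc B A m \<longleftrightarrow>
     (\<forall>b \<in> set B. rowmul b A m = replicate m 0) \<and>
     (\<forall>c. length c = length A \<and> rowmul c A m = replicate m 0 \<longrightarrow>
          (\<exists>l. length l = length B \<and> c = rowmul l B (length A)))"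

text \<open>The
  trailing "-> 0" is encoded by a final empty (0 x k) operator matrix.\<close>

definition formally_exact :: "nat list \<Rightarrow> D list list list \<Rightarrow> bool" where
  "formally_exact dims ops \<longleftrightarrow>
     length dims = Suc (length ops) \<and>
     (\<forall>i < length ops. is_matrix (dims ! Suc i) (dims ! i) (ops ! i)) \<and>
     (\<forall>i. Suc i < length ops \<longrightarrow> generates_cc (ops ! Suc i) (ops ! i) (dims ! i))"

text \<open>A (finite) jet / family of Taylor coefficients v(mu, k) of m unknowns y^k (k < m).\<close>

type_synonym jet = "mi \<times> nat \<Rightarrow> real"

text \<open>J_k(E), E = R^m: jets of order <= k;  S_k T* (x) E: homogeneous of order k.\<close>

definition Jsp :: "nat \<Rightarrow> nat \<Rightarrow> jet set" where
  "Jsp m k = {v. \<forall>\<mu> c. \<not> (mdeg \<mu> \<le> k \<and> c < m) \<longrightarrow> v (\<mu>, c) = 0}"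

definition Ssp :: "nat \<Rightarrow> nat \<Rightarrow> jet set" where
  "Ssp m k = {v. \<forall>\<mu> c. \<not> (mdeg \<mu> = k \<and> c < m) \<longrightarrow> v (\<mu>, c) = 0}"

text \<open>Formal action of the operator matrix A on jets: the nu-th derivative of the tau-th
  equation, (d_nu (A y)^tau) evaluated on the jet v.\<close>

definition opapp :: "D list list \<Rightarrow> jet \<Rightarrow> jet" where
  "opapp A v = (\<lambda>(\<nu>, \<tau>). if \<tau> < length A then
      (\<Sum>k<length (A ! \<tau>). \<Sum>\<alpha> \<in> Poly_Mapping.keys (A ! \<tau> ! k). Poly_Mapping.lookup (A ! \<tau> ! k) \<alpha> * v (\<alpha> + \<nu>, k))
      else 0)"

text \<open>The r-th prolongation R_{q+r} of the order-q system R_q defined by A (m unknowns).\<close>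

definition Rsys :: "D list list \<Rightarrow> nat \<Rightarrow> nat \<Rightarrow> nat \<Rightarrow> jet set" where
  "Rsys A m q r = {v \<in> Jsp m (q + r). \<forall>\<nu> \<tau>. mdeg \<nu> \<le> r \<and> \<tau> < length A \<longrightarrow> opapp A v (\<nu>, \<tau>) = 0}"

definition trunc :: "nat \<Rightarrow> jet \<Rightarrow> jet" where
  "trunc k v = (\<lambda>(\<mu>, c). if mdeg \<mu> \<le> k then v (\<mu>, c) else 0)"

definition formally_integrable :: "D list list \<Rightarrow> nat \<Rightarrow> nat \<Rightarrow> bool" where
  "formally_integrable A m q \<longleftrightarrow> (\<forall>r. trunc (q + r) ` Rsys A m q (Suc r) = Rsys A m q r)"

definition symb :: "D list list \<Rightarrow> nat \<Rightarrow> nat \<Rightarrow> nat \<Rightarrow> jet set" where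
  "symb A m q r = Rsys A m q r \<inter> Ssp m (q + r)"

text \<open>The symbol map sigma_{q+t}(A): S_{q+t} T* (x) R^m -> S_t T* (x) R^p (p = number of rows)
  and its image h_t.\<close>

definition symbol_map :: "D list list \<Rightarrow> nat \<Rightarrow> jet \<Rightarrow> jet" where
  "symbol_map A t v = (\<lambda>(\<nu>, \<tau>). if mdeg \<nu> = t then opapp A v (\<nu>, \<tau>) else 0)"

definition hsp :: "D list list \<Rightarrow> nat \<Rightarrow> nat \<Rightarrow> nat \<Rightarrow> jet set" where
  "hsp A m q t = symbol_map A t ` Ssp m (q + t)"

definition shiftj :: "mi \<Rightarrow> jet \<Rightarrow> jet" where
  "shiftj \<nu> v = (\<lambda>(\<mu>, c). v (\<mu> + \<nu>, c))"

definition prol :: "nat \<Rightarrow> nat \<Rightarrow> jet set \<Rightarrow> nat \<Rightarrow> jet set" where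
  "prol m q G r = {v \<in> Ssp m (q + r). \<forall>\<nu>. mdeg \<nu> = r \<longrightarrow> shiftj \<nu> v \<in> G}"

text \<open>Elements of wedge^j T* (x) V: functions of (I, mu, c), I a j-subset of {0,1,2}.\<close>

type_synonym form = "nat set \<times> mi \<times> nat \<Rightarrow> real"

definition Forms :: "nat \<Rightarrow> jet set \<Rightarrow> form set" where
  "Forms j V = {\<omega>. \<forall>I. (I \<subseteq> {0, 1, 2} \<and> card I = j \<longrightarrow> (\<lambda>(\<mu>, c). \<omega> (I, \<mu>, c)) \<in> V) \<and>
                         (\<not> (I \<subseteq> {0, 1, 2} \<and> card I = j) \<longrightarrow> (\<forall>\<mu> c. \<omega> (I, \<mu>, c) = 0))}"

definition spencer :: "form \<Rightarrow> form" where
  "spencer \<omega> = (\<lambda>(I, \<mu>, c). if I \<subseteq> {0, 1, 2} then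
      (\<Sum>i\<in>I. (-1) ^ card {l \<in> I. l < i} * \<omega> (I - {i}, \<mu> + unit_mi i, c)) else 0)"

definition delta_exact_at :: "nat \<Rightarrow> jet set \<Rightarrow> jet set \<Rightarrow> bool" where
  "delta_exact_at j Gin Gmid \<longleftrightarrow>
     (\<forall>\<omega> \<in> Forms j Gmid. spencer \<omega> = 0 \<longrightarrow> (\<exists>\<theta> \<in> Forms (j - 1) Gin. spencer \<theta> = \<omega>))"

definition acyclic :: "nat \<Rightarrow> nat \<Rightarrow> nat \<Rightarrow> jet set \<Rightarrow> bool" where
  "acyclic s m q G \<longleftrightarrow>
     (\<forall>r j. 1 \<le> j \<and> j \<le> s \<longrightarrow> delta_exact_at j (prol m q G (Suc r)) (prol m q G r))"

definition involutive :: "nat \<Rightarrow> nat \<Rightarrow> jet set \<Rightarrow> bool" where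
  "involutive m q G \<longleftrightarrow> acyclic 3 m q G"

definition fdim :: "('a \<Rightarrow> real) set \<Rightarrow> nat" where
  "fdim S = vector_space.dim (\<lambda>c f x. c * f x) S"

definition opP :: D where "opP = dop (0, 2, 0)"
definition opQ :: D where "opQ = dop (0, 1, 1) - dop (2, 0, 0)"
definition opR :: D where "opR = dop (0, 0, 2)"

end

theory Submission
  imports Defs
begin

text \<open>
  The operators \<open>P = d\<^sub>2\<^sub>2\<close>, \<open>Q = d\<^sub>2\<^sub>3 - d\<^sub>1\<^sub>1\<close>, \<open>R = d\<^sub>3\<^sub>3\<close> are homogeneous of order 2 with constant
  coefficients, so every jet of \<open>R\<^sub>2\<^sub>+\<^sub>r\<close> extends by zero to one of \<open>R\<^sub>2\<^sub>+\<^sub>r\<^sub>+\<^sub>1\<close>: the system is formally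
  integrable. Solving the symbol equations coefficientwise gives \<open>dim g\<^sub>2 = 3\<close>, \<open>g\<^sub>3\<close> spanned by
  \<open>y\<^sub>1\<^sub>1\<^sub>1 = y\<^sub>1\<^sub>2\<^sub>3 = 1\<close>, and \<open>g\<^sub>4 = 0\<close>. A nonzero element of a symbol whose prolongation vanishes
  gives a closed 3-form that is not exact, so \<open>g\<^sub>2\<close> and \<open>g\<^sub>3\<close> are not involutive, while \<open>\<delta>\<close> maps \<open>\<wedge>\<^sup>2T* \<otimes> g\<^sub>3\<close> bijectively onto
  \<open>\<wedge>\<^sup>3T* \<otimes> g\<^sub>2\<close>, which makes \<open>g\<^sub>3\<close> 2-acyclic.

  The symbol map \<open>\<sigma>\<^sub>t\<close> commutes with \<open>\<delta>\<close> and is injective on \<open>S\<^sub>2\<^sub>+\<^sub>tT*\<close> once \<open>g\<^sub>2\<^sub>+\<^sub>t = 0\<close>, so for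
  \<open>t \<ge> 2\<close> the exactness of the \<open>\<delta>\<close>-sequence of \<open>S\<^sub>kT*\<close> (the Poincar\'e lemma) passes to \<open>h\<^sub>t\<^sub>+\<^sub>1\<close>:
  \<open>h\<^sub>3\<close> is 2-acyclic. For \<open>h\<^sub>2\<close> the kernel \<open>g\<^sub>3\<close> of \<open>\<sigma>\<^sub>1\<close> produces a closed 2-form that is not exact.

  The compatibility conditions are the syzygies of \<open>(P, Q, R)\<close> in \<open>\<real>[d\<^sub>1, d\<^sub>2, d\<^sub>3]\<close>, which reduce to
  those of the coprime monomials \<open>P\<close> and \<open>R\<close>.
\<close>

lemma plus_mi [simp]: "((a::nat), (b::nat), (c::nat)) + (d, e, f) = (a + d, b + e, c + f)"
  by (simp add: plus_prod_def)

lemma zero_mi: "(0::mi) = (0, 0, 0)"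
  by (simp add: zero_prod_def)

lemma mdeg_add [simp]: "mdeg (\<mu> + \<nu>) = mdeg \<mu> + mdeg \<nu>"
  by (cases \<mu>; cases \<nu>) simp

lemma mdeg_eq_0_iff: "mdeg \<mu> = 0 \<longleftrightarrow> \<mu> = 0"
  by (cases \<mu>) (simp add: zero_mi)

lemma mdeg_cases:
  assumes "mdeg \<mu> = n"
  shows "\<mu> \<in> set [(a, b, n - a - b). a \<leftarrow> [0..<Suc n], b \<leftarrow> [0..<Suc (n - a)]]"
  using assms by (cases \<mu>) force

lemma mdeg_split:
  assumes "mdeg \<nu> = a + b"
  obtains \<nu>1 \<nu>2 where "\<nu> = \<nu>1 + \<nu>2" "mdeg \<nu>1 = a" "mdeg \<nu>2 = b"
proof -
  obtain x y z where \<nu>: "\<nu> = (x, y, z)"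
    by (cases \<nu>)
  define x1 where "x1 = min x a"
  define y1 where "y1 = min y (a - x1)"
  define z1 where "z1 = a - x1 - y1"
  have "x + y + z = a + b"
    using assms \<nu> by simp
  then have "x1 \<le> x" "y1 \<le> y" "z1 \<le> z" "x1 + y1 + z1 = a"
    unfolding x1_def y1_def z1_def by (auto simp: min_def)
  then show thesis
    using that[of "(x1, y1, z1)" "(x - x1, y - y1, z - z1)"] \<nu> \<open>x + y + z = a + b\<close> by simp
qed

lemma jet_eqI: "(\<And>\<mu> c. f (\<mu>, c) = g (\<mu>, c)) \<Longrightarrow> (f::jet) = g"
  by auto

lemma Ssp_vanish: "v \<in> Ssp m k \<Longrightarrow> \<not> (mdeg \<mu> = k \<and> c < m) \<Longrightarrow> v (\<mu>, c) = 0"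
  unfolding Ssp_def by blast

lemma SspI: "(\<And>\<mu> c. \<not> (mdeg \<mu> = k \<and> c < m) \<Longrightarrow> v (\<mu>, c) = 0) \<Longrightarrow> v \<in> Ssp m k"
  unfolding Ssp_def by blast

lemma Ssp_subset_Jsp: "Ssp m k \<subseteq> Jsp m k"
  unfolding Ssp_def Jsp_def by auto

lemma zero_in_Ssp [simp]: "0 \<in> Ssp m k"
  by (rule SspI) simp

lemma Ssp_add: "x \<in> Ssp m k \<Longrightarrow> y \<in> Ssp m k \<Longrightarrow> x + y \<in> Ssp m k"
  by (rule SspI) (simp add: Ssp_vanish)

lemma Ssp_diff: "x \<in> Ssp m k \<Longrightarrow> y \<in> Ssp m k \<Longrightarrow> x - y \<in> Ssp m k"
  by (rule SspI) (simp add: Ssp_vanish)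

lemma Jsp_vanish: "v \<in> Jsp m k \<Longrightarrow> \<not> (mdeg \<mu> \<le> k \<and> c < m) \<Longrightarrow> v (\<mu>, c) = 0"
  unfolding Jsp_def by blast

lemma JspI: "(\<And>\<mu> c. \<not> (mdeg \<mu> \<le> k \<and> c < m) \<Longrightarrow> v (\<mu>, c) = 0) \<Longrightarrow> v \<in> Jsp m k"
  unfolding Jsp_def by blast

lemma Jsp_mono: "k \<le> k' \<Longrightarrow> Jsp m k \<subseteq> Jsp m k'"
  unfolding Jsp_def using le_trans by blast

text \<open>On Taylor coefficients, \<open>shiftj \<nu>\<close> is the formal derivative \<open>d\<^sub>\<nu>\<close>; below, \<open>sh0\<close>, \<open>sh1\<close>,
  \<open>sh2\<close> are \<open>d\<^sub>1\<close>, \<open>d\<^sub>2\<close>, \<open>d\<^sub>3\<close>.\<close>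

lemma shiftj_apply [simp]: "shiftj \<nu> v (\<mu>, c) = v (\<mu> + \<nu>, c)"
  by (simp add: shiftj_def)

lemma shiftj_shiftj: "shiftj \<nu> (shiftj \<nu>' v) = shiftj (\<nu> + \<nu>') v"
  by (rule jet_eqI) (simp add: add.assoc)

lemma shiftj_commute: "shiftj \<nu> (shiftj \<nu>' v) = shiftj \<nu>' (shiftj \<nu> v)"
  by (simp add: shiftj_shiftj add.commute)

lemma shiftj_add: "shiftj \<nu> (x + y) = shiftj \<nu> x + shiftj \<nu> y"
  by (rule jet_eqI) simp

lemma shiftj_diff: "shiftj \<nu> (x - y) = shiftj \<nu> x - shiftj \<nu> y"
  by (rule jet_eqI) simp

lemma shiftj_zero [simp]: "shiftj \<nu> 0 = 0"
  by (rule jet_eqI) simp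

lemma shiftj_mdeg_0: "mdeg \<nu> = 0 \<Longrightarrow> shiftj \<nu> v = v"
  by (rule jet_eqI) (simp add: mdeg_eq_0_iff)

lemma shiftj_Ssp: "v \<in> Ssp m (k + d) \<Longrightarrow> mdeg \<nu> = d \<Longrightarrow> shiftj \<nu> v \<in> Ssp m k"
  by (rule SspI) (simp add: Ssp_vanish)

abbreviation sh0 :: "jet \<Rightarrow> jet" where "sh0 \<equiv> shiftj (Suc 0, 0, 0)"
abbreviation sh1 :: "jet \<Rightarrow> jet" where "sh1 \<equiv> shiftj (0, Suc 0, 0)"
abbreviation sh2 :: "jet \<Rightarrow> jet" where "sh2 \<equiv> shiftj (0, 0, Suc 0)"

lemma unit_shifts_Ssp:
  assumes "v \<in> Ssp m (Suc k)"
  shows "sh0 v \<in> Ssp m k" "sh1 v \<in> Ssp m k" "sh2 v \<in> Ssp m k"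
  using shiftj_Ssp[of v m k 1] assms by simp_all

lemma Ssp_eq_by_unit_shifts:
  assumes "x \<in> Ssp m (Suc k)" "y \<in> Ssp m (Suc k)"
    and "sh0 x = sh0 y" "sh1 x = sh1 y" "sh2 x = sh2 y"
  shows "x = y"
proof (rule jet_eqI)
  fix \<mu> :: mi and c :: nat
  obtain a b d where \<mu>: "\<mu> = (a, b, d)"
    by (cases \<mu>)
  show "x (\<mu>, c) = y (\<mu>, c)"
  proof (cases "mdeg \<mu> = Suc k \<and> c < m")
    case False
    then show ?thesis
      using Ssp_vanish assms(1,2) by metis
  next
    case True
    then consider "a \<ge> 1" | "b \<ge> 1" | "d \<ge> 1"
      using \<mu> by fastforce
    then show ?thesis
    proof cases
      case 1
      then show ?thesis
        using fun_cong[OF assms(3), of "((a - 1, b, d), c)"] \<mu> by simp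
    next
      case 2
      then show ?thesis
        using fun_cong[OF assms(4), of "((a, b - 1, d), c)"] \<mu> by simp
    next
      case 3
      then show ?thesis
        using fun_cong[OF assms(5), of "((a, b, d - 1), c)"] \<mu> by simp
    qed
  qed
qed

section \<open>Exterior forms in three variables and the Spencer map\<close>

text \<open>Forms in \<open>\<wedge>\<^sup>jT* \<otimes> V\<close> listed by their components on \<open>dx\<^sup>I\<close>, the subsets \<open>I\<close> in lexicographic order.\<close>

definition form0 :: "jet \<Rightarrow> form" where
  "form0 a = (\<lambda>(I, \<mu>, c). if I = {} then a (\<mu>, c) else 0)"

definition form1 :: "jet \<Rightarrow> jet \<Rightarrow> jet \<Rightarrow> form" where
  "form1 a0 a1 a2 = (\<lambda>(I, \<mu>, c). if I = {0} then a0 (\<mu>, c) else if I = {1} then a1 (\<mu>, c)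
      else if I = {2} then a2 (\<mu>, c) else 0)"

definition form2 :: "jet \<Rightarrow> jet \<Rightarrow> jet \<Rightarrow> form" where
  "form2 a0 a1 a2 = (\<lambda>(I, \<mu>, c). if I = {0, 1} then a0 (\<mu>, c) else if I = {0, 2} then a1 (\<mu>, c)
      else if I = {1, 2} then a2 (\<mu>, c) else 0)"

definition form3 :: "jet \<Rightarrow> form" where
  "form3 a = (\<lambda>(I, \<mu>, c). if I = {0, 1, 2} then a (\<mu>, c) else 0)"

lemma form_apply [simp]:
  "form0 a (I, \<mu>, c) = (if I = {} then a (\<mu>, c) else 0)"
  "form1 a0 a1 a2 (I, \<mu>, c) = (if I = {0} then a0 (\<mu>, c) else if I = {1} then a1 (\<mu>, c)
      else if I = {2} then a2 (\<mu>, c) else 0)"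
  "form2 a0 a1 a2 (I, \<mu>, c) = (if I = {0, 1} then a0 (\<mu>, c) else if I = {0, 2} then a1 (\<mu>, c)
      else if I = {1, 2} then a2 (\<mu>, c) else 0)"
  "form3 a (I, \<mu>, c) = (if I = {0, 1, 2} then a (\<mu>, c) else 0)"
  by (simp_all add: form0_def form1_def form2_def form3_def)

lemma form_eqI: "(\<And>I \<mu> c. f (I, \<mu>, c) = g (I, \<mu>, c)) \<Longrightarrow> (f::form) = g"
  by auto

lemma form1_eq_iff: "form1 a0 a1 a2 = form1 b0 b1 b2 \<longleftrightarrow> a0 = b0 \<and> a1 = b1 \<and> a2 = b2"
  by (auto simp: fun_eq_iff insert_eq_iff dest: spec[of _ "{0}"] spec[of _ "{1}"] spec[of _ "{2}"])

lemma form2_eq_iff: "form2 a0 a1 a2 = form2 b0 b1 b2 \<longleftrightarrow> a0 = b0 \<and> a1 = b1 \<and> a2 = b2"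
  by (auto simp: fun_eq_iff insert_eq_iff dest: spec[of _ "{0, 1}"] spec[of _ "{0, 2}"] spec[of _ "{1, 2}"])

lemma form3_eq_iff: "form3 a = form3 b \<longleftrightarrow> a = b"
  by (auto simp: fun_eq_iff dest: spec[of _ "{0, 1, 2}"])

lemma forms_zero [simp]: "form0 0 = 0" "form1 0 0 0 = 0" "form2 0 0 0 = 0" "form3 0 = 0"
  by (rule form_eqI; simp)+

lemma subset_012_cases:
  assumes "I \<subseteq> {0, 1, 2::nat}"
  shows "I = {} \<or> I = {0} \<or> I = {1} \<or> I = {2} \<or> I = {0, 1} \<or> I = {0, 2} \<or> I = {1, 2} \<or> I = {0, 1, 2}"
proof -
  have "I \<in> Pow {0, 1, 2}"
    using assms by simp
  then show ?thesis
    by (simp add: Pow_insert insert_commute)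
qed

lemma filter_less_eq_Int: "{l \<in> I. l < (i::nat)} = I \<inter> {..<i}"
  by auto

lemma spencer_apply:
  "spencer \<omega> ({}, \<mu>, c) = 0"
  "spencer \<omega> ({0}, \<mu>, c) = \<omega> ({}, \<mu> + (1, 0, 0), c)"
  "spencer \<omega> ({1}, \<mu>, c) = \<omega> ({}, \<mu> + (0, 1, 0), c)"
  "spencer \<omega> ({2}, \<mu>, c) = \<omega> ({}, \<mu> + (0, 0, 1), c)"
  "spencer \<omega> ({0, 1}, \<mu>, c) = \<omega> ({1}, \<mu> + (1, 0, 0), c) - \<omega> ({0}, \<mu> + (0, 1, 0), c)"
  "spencer \<omega> ({0, 2}, \<mu>, c) = \<omega> ({2}, \<mu> + (1, 0, 0), c) - \<omega> ({0}, \<mu> + (0, 0, 1), c)"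
  "spencer \<omega> ({1, 2}, \<mu>, c) = \<omega> ({2}, \<mu> + (0, 1, 0), c) - \<omega> ({1}, \<mu> + (0, 0, 1), c)"
  "spencer \<omega> ({0, 1, 2}, \<mu>, c) =
     \<omega> ({1, 2}, \<mu> + (1, 0, 0), c) - \<omega> ({0, 2}, \<mu> + (0, 1, 0), c) + \<omega> ({0, 1}, \<mu> + (0, 0, 1), c)"
  by (simp only: spencer_def prod.case filter_less_eq_Int;
      simp add: Int_insert_left insert_Diff_if unit_mi_def)+

lemma spencer_eqI:
  assumes "\<And>\<mu> c. spencer \<omega> ({}, \<mu>, c) = \<eta> ({}, \<mu>, c)"
    "\<And>\<mu> c. spencer \<omega> ({0}, \<mu>, c) = \<eta> ({0}, \<mu>, c)"
    "\<And>\<mu> c. spencer \<omega> ({1}, \<mu>, c) = \<eta> ({1}, \<mu>, c)"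
    "\<And>\<mu> c. spencer \<omega> ({2}, \<mu>, c) = \<eta> ({2}, \<mu>, c)"
    "\<And>\<mu> c. spencer \<omega> ({0, 1}, \<mu>, c) = \<eta> ({0, 1}, \<mu>, c)"
    "\<And>\<mu> c. spencer \<omega> ({0, 2}, \<mu>, c) = \<eta> ({0, 2}, \<mu>, c)"
    "\<And>\<mu> c. spencer \<omega> ({1, 2}, \<mu>, c) = \<eta> ({1, 2}, \<mu>, c)"
    "\<And>\<mu> c. spencer \<omega> ({0, 1, 2}, \<mu>, c) = \<eta> ({0, 1, 2}, \<mu>, c)"
    and "\<And>I \<mu> c. \<not> I \<subseteq> {0, 1, 2} \<Longrightarrow> \<eta> (I, \<mu>, c) = 0"
  shows "spencer \<omega> = \<eta>"
proof (rule form_eqI)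
  fix I \<mu> c
  show "spencer \<omega> (I, \<mu>, c) = \<eta> (I, \<mu>, c)"
  proof (cases "I \<subseteq> {0, 1, 2}")
    case True
    with subset_012_cases[OF True] show ?thesis
      using assms(1-8) by (elim disjE) simp_all
  next
    case False
    then show ?thesis
      using assms(9) by (simp add: spencer_def)
  qed
qed

lemma spencer_form0: "spencer (form0 a) = form1 (sh0 a) (sh1 a) (sh2 a)"
  by (rule spencer_eqI) (unfold spencer_apply, auto simp: insert_eq_iff)

lemma spencer_form1:
  "spencer (form1 a0 a1 a2) = form2 (sh0 a1 - sh1 a0) (sh0 a2 - sh2 a0) (sh1 a2 - sh2 a1)"
  by (rule spencer_eqI) (unfold spencer_apply, auto simp: insert_eq_iff)

lemma spencer_form2: "spencer (form2 a0 a1 a2) = form3 (sh0 a2 - sh1 a1 + sh2 a0)"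
  by (rule spencer_eqI) (unfold spencer_apply, auto simp: insert_eq_iff)

lemma spencer_form3: "spencer (form3 a) = 0"
  by (rule spencer_eqI) (unfold spencer_apply, auto simp: insert_eq_iff)

lemma spencer_spencer_form1: "spencer (spencer (form1 a0 a1 a2)) = 0"
  by (simp add: spencer_form1 spencer_form2 shiftj_diff shiftj_shiftj)

lemma spencer_zero [simp]: "spencer 0 = 0"
  by (rule ext) (simp add: spencer_def split: prod.splits)

lemma subsets_012_card:
  "{I. I \<subseteq> {0, 1, 2::nat} \<and> card I = 0} = {{}}"
  "{I. I \<subseteq> {0, 1, 2::nat} \<and> card I = 1} = {{0}, {1}, {2}}"
  "{I. I \<subseteq> {0, 1, 2::nat} \<and> card I = 2} = {{0, 1}, {0, 2}, {1, 2}}"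
  "{I. I \<subseteq> {0, 1, 2::nat} \<and> card I = 3} = {{0, 1, 2}}"
  by (rule set_eqI, rule iffI, (clarify, drule subset_012_cases, elim disjE; simp add: insert_eq_iff),
      simp only: mem_Collect_eq insert_iff empty_iff, elim disjE FalseE; simp)+

lemma Forms_iff: "\<omega> \<in> Forms j V \<longleftrightarrow>
    (\<forall>I \<in> {I. I \<subseteq> {0, 1, 2} \<and> card I = j}. (\<lambda>(\<mu>, c). \<omega> (I, \<mu>, c)) \<in> V) \<and>
    (\<forall>I \<mu> c. I \<notin> {I. I \<subseteq> {0, 1, 2} \<and> card I = j} \<longrightarrow> \<omega> (I, \<mu>, c) = 0)"
  unfolding Forms_def by blast

lemma Forms0_iff: "\<omega> \<in> Forms 0 V \<longleftrightarrow> (\<exists>a \<in> V. \<omega> = form0 a)"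
proof
  assume "\<omega> \<in> Forms 0 V"
  then have "(\<lambda>(\<mu>, c). \<omega> ({}, \<mu>, c)) \<in> V" and zero: "\<And>I \<mu> c. I \<notin> {{}} \<Longrightarrow> \<omega> (I, \<mu>, c) = 0"
    unfolding Forms_iff subsets_012_card by blast+
  moreover have "\<omega> = form0 (\<lambda>(\<mu>, c). \<omega> ({}, \<mu>, c))"
    by (intro form_eqI) (simp add: zero)
  ultimately show "\<exists>a \<in> V. \<omega> = form0 a"
    by blast
next
  assume "\<exists>a \<in> V. \<omega> = form0 a"
  then show "\<omega> \<in> Forms 0 V"
    unfolding Forms_iff subsets_012_card by (elim bexE) (simp add: insert_eq_iff)
qed

lemma Forms1_iff: "\<omega> \<in> Forms 1 V \<longleftrightarrow> (\<exists>a0 \<in> V. \<exists>a1 \<in> V. \<exists>a2 \<in> V. \<omega> = form1 a0 a1 a2)"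
proof
  let ?a = "\<lambda>I. \<lambda>(\<mu>, c). \<omega> (I, \<mu>, c)"
  assume "\<omega> \<in> Forms 1 V"
  then have "?a {0} \<in> V" "?a {1} \<in> V" "?a {2} \<in> V"
    and zero: "\<And>I \<mu> c. I \<notin> {{0}, {1}, {2}} \<Longrightarrow> \<omega> (I, \<mu>, c) = 0"
    unfolding Forms_iff subsets_012_card by blast+
  moreover have "\<omega> = form1 (?a {0}) (?a {1}) (?a {2})"
    by (intro form_eqI) (simp add: zero)
  ultimately show "\<exists>a0 \<in> V. \<exists>a1 \<in> V. \<exists>a2 \<in> V. \<omega> = form1 a0 a1 a2"
    by blast
next
  assume "\<exists>a0 \<in> V. \<exists>a1 \<in> V. \<exists>a2 \<in> V. \<omega> = form1 a0 a1 a2"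
  then show "\<omega> \<in> Forms 1 V"
    unfolding Forms_iff subsets_012_card by (elim bexE) (simp add: insert_eq_iff)
qed

lemma Forms2_iff: "\<omega> \<in> Forms 2 V \<longleftrightarrow> (\<exists>a0 \<in> V. \<exists>a1 \<in> V. \<exists>a2 \<in> V. \<omega> = form2 a0 a1 a2)"
proof
  let ?a = "\<lambda>I. \<lambda>(\<mu>, c). \<omega> (I, \<mu>, c)"
  assume "\<omega> \<in> Forms 2 V"
  then have "?a {0, 1} \<in> V" "?a {0, 2} \<in> V" "?a {1, 2} \<in> V"
    and zero: "\<And>I \<mu> c. I \<notin> {{0, 1}, {0, 2}, {1, 2}} \<Longrightarrow> \<omega> (I, \<mu>, c) = 0"
    unfolding Forms_iff subsets_012_card by blast+
  moreover have "\<omega> = form2 (?a {0, 1}) (?a {0, 2}) (?a {1, 2})"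
    by (intro form_eqI) (simp add: zero)
  ultimately show "\<exists>a0 \<in> V. \<exists>a1 \<in> V. \<exists>a2 \<in> V. \<omega> = form2 a0 a1 a2"
    by blast
next
  assume "\<exists>a0 \<in> V. \<exists>a1 \<in> V. \<exists>a2 \<in> V. \<omega> = form2 a0 a1 a2"
  then show "\<omega> \<in> Forms 2 V"
    unfolding Forms_iff subsets_012_card by (elim bexE) (simp add: insert_eq_iff)
qed

lemma Forms3_iff: "\<omega> \<in> Forms 3 V \<longleftrightarrow> (\<exists>a \<in> V. \<omega> = form3 a)"
proof
  assume "\<omega> \<in> Forms 3 V"
  then have "(\<lambda>(\<mu>, c). \<omega> ({0, 1, 2}, \<mu>, c)) \<in> V"
    and zero: "\<And>I \<mu> c. I \<notin> {{0, 1, 2}} \<Longrightarrow> \<omega> (I, \<mu>, c) = 0"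
    unfolding Forms_iff subsets_012_card by blast+
  moreover have "\<omega> = form3 (\<lambda>(\<mu>, c). \<omega> ({0, 1, 2}, \<mu>, c))"
    by (intro form_eqI) (simp add: zero)
  ultimately show "\<exists>a \<in> V. \<omega> = form3 a"
    by blast
next
  assume "\<exists>a \<in> V. \<omega> = form3 a"
  then show "\<omega> \<in> Forms 3 V"
    unfolding Forms_iff subsets_012_card by (elim bexE) (simp add: insert_eq_iff)
qed

lemma zero_in_Forms: "0 \<in> V \<Longrightarrow> 0 \<in> Forms j V"
  unfolding Forms_def by (simp add: zero_fun_def case_prod_unfold)

lemma Forms_component:
  "\<omega> \<in> Forms j V \<Longrightarrow> I \<subseteq> {0, 1, 2} \<Longrightarrow> card I = j \<Longrightarrow> (\<lambda>(\<mu>, c). \<omega> (I, \<mu>, c)) \<in> V"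
  unfolding Forms_def by blast

lemma Forms_vanish: "\<omega> \<in> Forms j V \<Longrightarrow> \<not> (I \<subseteq> {0, 1, 2} \<and> card I = j) \<Longrightarrow> \<omega> (I, \<mu>, c) = 0"
  unfolding Forms_def by blast

lemma Forms_zero_space:
  assumes "\<omega> \<in> Forms j {0}"
  shows "\<omega> = 0"
proof (rule form_eqI)
  fix I \<mu> c
  show "\<omega> (I, \<mu>, c) = 0 (I, \<mu>, c)"
  proof (cases "I \<subseteq> {0, 1, 2} \<and> card I = j")
    case True
    then have "(\<lambda>(\<mu>, c). \<omega> (I, \<mu>, c)) = 0"
      using Forms_component[OF assms] by blast
    from fun_cong[OF this, of "(\<mu>, c)"] show ?thesis
      by simp
  next
    case False
    then show ?thesis
      using Forms_vanish[OF assms] by simp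
  qed
qed

lemma delta_exact_at_zero_mid: "0 \<in> G' \<Longrightarrow> delta_exact_at j G' {0}"
  unfolding delta_exact_at_def using Forms_zero_space zero_in_Forms spencer_zero by metis

lemma delta_exact_at_zero_source:
  assumes "\<And>\<omega>. \<omega> \<in> Forms j G \<Longrightarrow> spencer \<omega> = 0 \<Longrightarrow> \<omega> = 0"
  shows "delta_exact_at j {0} G"
  unfolding delta_exact_at_def using assms zero_in_Forms[of "{0}"] spencer_zero by blast

lemma not_delta_exact_at_3_zero_source:
  assumes "v \<in> G" "v \<noteq> 0"
  shows "\<not> delta_exact_at 3 {0} G"
proof
  assume "delta_exact_at 3 {0} G"
  moreover have "form3 v \<in> Forms 3 G"
    using assms(1) Forms3_iff by blast
  ultimately obtain \<theta> where "\<theta> \<in> Forms 2 {0}" "spencer \<theta> = form3 v"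
    unfolding delta_exact_at_def using spencer_form3 by fastforce
  then have "form3 v = form3 0"
    using Forms_zero_space by fastforce
  with assms(2) show False
    unfolding form3_eq_iff by blast
qed

section \<open>The Poincar\'e lemma for homogeneous jets\<close>

lemma Ssp_integrate:
  assumes u: "u0 \<in> Ssp m k" "u1 \<in> Ssp m k" "u2 \<in> Ssp m k"
    and "sh1 u0 = sh0 u1" "sh2 u0 = sh0 u2" "sh2 u1 = sh1 u2"
  obtains U where "U \<in> Ssp m (Suc k)" "sh0 U = u0" "sh1 U = u1" "sh2 U = u2"
proof -
  define U :: jet where "U = (\<lambda>((a, b, d), c). if a + b + d = Suc k \<and> c < m then
     (if a \<ge> 1 then u0 ((a - 1, b, d), c) else if b \<ge> 1 then u1 ((a, b - 1, d), c)
      else if d \<ge> 1 then u2 ((a, b, d - 1), c) else 0) else 0)"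
  have e01: "u0 ((a, b + 1, d), c) = u1 ((a + 1, b, d), c)" for a b d c
    using fun_cong[OF assms(4), of "((a, b, d), c)"] by simp
  have e02: "u0 ((a, b, d + 1), c) = u2 ((a + 1, b, d), c)" for a b d c
    using fun_cong[OF assms(5), of "((a, b, d), c)"] by simp
  have e12: "u1 ((a, b, d + 1), c) = u2 ((a, b + 1, d), c)" for a b d c
    using fun_cong[OF assms(6), of "((a, b, d), c)"] by simp
  have vanish: "x ((a, b, d), c) = 0" if "x \<in> Ssp m k" "\<not> (a + b + d = k \<and> c < m)" for x a b d c
    using Ssp_vanish[OF that(1), of "(a, b, d)" c] that(2) by simp
  have "U \<in> Ssp m (Suc k)"
    by (rule SspI) (auto simp: U_def)
  moreover have "sh0 U = u0"
    by (rule jet_eqI) (use vanish[OF u(1)] in \<open>auto simp: U_def\<close>)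
  moreover have "sh1 U = u1"
  proof (rule jet_eqI)
    fix \<mu> :: mi and c :: nat
    obtain a b d where \<mu>: "\<mu> = (a, b, d)"
      by (cases \<mu>)
    show "sh1 U (\<mu>, c) = u1 (\<mu>, c)"
      using e01[of "a - 1" b d c] vanish[OF u(2), of a b d c] by (cases "a \<ge> 1") (auto simp: U_def \<mu>)
  qed
  moreover have "sh2 U = u2"
  proof (rule jet_eqI)
    fix \<mu> :: mi and c :: nat
    obtain a b d where \<mu>: "\<mu> = (a, b, d)"
      by (cases \<mu>)
    show "sh2 U (\<mu>, c) = u2 (\<mu>, c)"
      using e02[of "a - 1" b d c] e12[of a "b - 1" d c] vanish[OF u(3), of a b d c]
      by (cases "a \<ge> 1"; cases "b \<ge> 1") (auto simp: U_def \<mu>)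
  qed
  ultimately show thesis
    using that by blast
qed

definition integ0 :: "jet \<Rightarrow> jet" where
  "integ0 x = (\<lambda>((a, b, d), c). if a \<ge> 1 then x ((a - 1, b, d), c) else 0)"

definition integ1 :: "jet \<Rightarrow> jet" where
  "integ1 x = (\<lambda>((a, b, d), c). if a = 0 \<and> b \<ge> 1 then x ((a, b - 1, d), c) else 0)"

lemma sh0_integ0: "sh0 (integ0 x) = x"
  by (rule jet_eqI) (auto simp: integ0_def)

lemma integ0_Ssp: "x \<in> Ssp m k \<Longrightarrow> integ0 x \<in> Ssp m (Suc k)"
  by (rule SspI) (auto simp: integ0_def Ssp_vanish split: prod.splits)

lemma integ1_Ssp: "x \<in> Ssp m k \<Longrightarrow> integ1 x \<in> Ssp m (Suc k)"
  by (rule SspI) (auto simp: integ1_def Ssp_vanish split: prod.splits)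

text \<open>\<open>integ1\<close> integrates in \<open>x\<^sup>2\<close> along \<open>x\<^sup>1 = 0\<close>; this is an antiderivative only for jets
  independent of \<open>x\<^sup>1\<close>.\<close>

lemma
  assumes "sh0 x = 0"
  shows sh0_integ1: "sh0 (integ1 x) = 0" and sh1_integ1: "sh1 (integ1 x) = x"
proof -
  show "sh0 (integ1 x) = 0"
    by (rule jet_eqI) (auto simp: integ1_def)
  have "x ((a, b, d), c) = 0" if "a \<ge> 1" for a b d c
    using fun_cong[OF assms, of "((a - 1, b, d), c)"] that by simp
  then show "sh1 (integ1 x) = x"
    by (intro jet_eqI) (auto simp: integ1_def)
qed

lemma delta_exact_Ssp_1: "delta_exact_at 1 (Ssp m (Suc k)) (Ssp m k)"
  unfolding delta_exact_at_def
proof (intro ballI impI)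
  fix \<omega> assume "\<omega> \<in> Forms 1 (Ssp m k)" and closed: "spencer \<omega> = 0"
  then obtain u0 u1 u2 where u: "u0 \<in> Ssp m k" "u1 \<in> Ssp m k" "u2 \<in> Ssp m k"
    and \<omega>: "\<omega> = form1 u0 u1 u2"
    unfolding Forms1_iff by blast
  have "sh1 u0 = sh0 u1" "sh2 u0 = sh0 u2" "sh2 u1 = sh1 u2"
    using closed unfolding \<omega> spencer_form1 forms_zero(3)[symmetric] form2_eq_iff by simp_all
  then obtain U where "U \<in> Ssp m (Suc k)" "sh0 U = u0" "sh1 U = u1" "sh2 U = u2"
    using Ssp_integrate[OF u] by blast
  then show "\<exists>\<theta> \<in> Forms (1 - 1) (Ssp m (Suc k)). spencer \<theta> = \<omega>"
    by (intro bexI[of _ "form0 U"]) (auto simp: \<omega> spencer_form0 Forms0_iff)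
qed

text \<open>A closed \<open>(a\<^sub>0, a\<^sub>1, a\<^sub>2)\<close> is the \<open>\<delta>\<close> of \<open>(0, \<integral>\<^sub>1a\<^sub>0, \<integral>\<^sub>1a\<^sub>1 + \<integral>\<^sub>2f)\<close>, where the remainder \<open>f\<close> of \<open>a\<^sub>2\<close>
  is independent of \<open>x\<^sup>1\<close> by closedness.\<close>

lemma delta_exact_Ssp_2: "delta_exact_at 2 (Ssp m (Suc k)) (Ssp m k)"
  unfolding delta_exact_at_def
proof (intro ballI impI)
  fix \<omega> assume "\<omega> \<in> Forms 2 (Ssp m k)" and closed: "spencer \<omega> = 0"
  then obtain a0 a1 a2 where a: "a0 \<in> Ssp m k" "a1 \<in> Ssp m k" "a2 \<in> Ssp m k"
    and \<omega>: "\<omega> = form2 a0 a1 a2"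
    unfolding Forms2_iff by blast
  have "sh0 a2 - sh1 a1 + sh2 a0 = 0"
    using closed unfolding \<omega> spencer_form2 forms_zero(4)[symmetric] form3_eq_iff .
  define f where "f = a2 - sh1 (integ0 a1) + sh2 (integ0 a0)"
  have "sh0 f = sh0 a2 - sh1 (sh0 (integ0 a1)) + sh2 (sh0 (integ0 a0))"
    unfolding f_def by (simp only: shiftj_diff shiftj_add shiftj_commute[of "(Suc 0, 0, 0)"])
  also have "\<dots> = 0"
    using \<open>sh0 a2 - sh1 a1 + sh2 a0 = 0\<close> by (simp only: sh0_integ0)
  finally have f: "sh0 f = 0" .
  have "f \<in> Ssp m k"
    unfolding f_def using a unit_shifts_Ssp integ0_Ssp by (simp add: Ssp_add Ssp_diff)
  define \<theta> where "\<theta> = form1 0 (integ0 a0) (integ0 a1 + integ1 f)"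
  have "\<theta> \<in> Forms 1 (Ssp m (Suc k))"
    unfolding \<theta>_def Forms1_iff
    using zero_in_Ssp integ0_Ssp[OF a(1)] Ssp_add[OF integ0_Ssp[OF a(2)] integ1_Ssp[OF \<open>f \<in> Ssp m k\<close>]]
    by blast
  moreover have "spencer \<theta> = \<omega>"
    unfolding \<theta>_def \<omega> spencer_form1 form2_eq_iff
    by (simp add: shiftj_add sh0_integ0 sh0_integ1[OF f] sh1_integ1[OF f]) (simp add: f_def)
  ultimately show "\<exists>\<theta> \<in> Forms (2 - 1) (Ssp m (Suc k)). spencer \<theta> = \<omega>"
    by auto
qed

lemma sum_fun_apply: "(\<Sum>i\<in>B. f i) x = (\<Sum>i\<in>B. f i x)"
  by (induction B rule: infinite_finite_induct) auto

lemma vector_space_fun: "vector_space (\<lambda>(c::real) (f::'a \<Rightarrow> real) x. c * f x)"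
  by unfold_locales (auto simp: fun_eq_iff algebra_simps)

lemma fdim_dual_basis:
  fixes b :: "'i \<Rightarrow> 'a \<Rightarrow> real" and p :: "'i \<Rightarrow> 'a" and V :: "('a \<Rightarrow> real) set"
  assumes "finite B" "b ` B \<subseteq> V"
    and span: "\<And>v. v \<in> V \<Longrightarrow> \<exists>k. v = (\<lambda>x. \<Sum>i\<in>B. k i * b i x)"
    and dual: "\<And>i j. i \<in> B \<Longrightarrow> j \<in> B \<Longrightarrow> b i (p j) = (if i = j then 1 else 0)"
  shows "fdim V = card B"
proof -
  interpret v: vector_space "\<lambda>(c::real) (f::'a \<Rightarrow> real) x. c * f x"
    by (rule vector_space_fun)
  have inj: "inj_on b B"
    by (rule inj_onI) (metis dual one_neq_zero)
  have "v.dim V = card (b ` B)"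
  proof (rule v.dim_unique)
    show "b ` B \<subseteq> V"
      by fact
    show "V \<subseteq> v.span (b ` B)"
    proof
      fix v assume "v \<in> V"
      then obtain k where k: "v = (\<lambda>x. \<Sum>i\<in>B. k i * b i x)"
        using span by blast
      have "v = (\<Sum>i\<in>B. (\<lambda>x. k i * b i x))"
        by (simp add: k sum_fun_apply fun_eq_iff)
      also have "\<dots> \<in> v.span (b ` B)"
        by (intro v.span_sum v.span_scale v.span_base) auto
      finally show "v \<in> v.span (b ` B)" .
    qed
    show "v.independent (b ` B)"
    proof (rule v.independent_if_scalars_zero)
      show "finite (b ` B)"
        using \<open>finite B\<close> by simp
    next
      fix c w assume zero: "(\<Sum>w\<in>b ` B. (\<lambda>x. c w * w x)) = 0" and "w \<in> b ` B"
      then obtain j where "j \<in> B" "w = b j"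
        by blast
      have "0 = (\<Sum>i\<in>B. (\<lambda>x. c (b i) * b i x)) (p j)"
        using zero by (simp add: sum.reindex[OF inj])
      also have "\<dots> = (\<Sum>i\<in>B. if i = j then c (b i) else 0)"
        unfolding sum_fun_apply using dual \<open>j \<in> B\<close> by (intro sum.cong) auto
      also have "\<dots> = c w"
        using \<open>finite B\<close> \<open>j \<in> B\<close> \<open>w = b j\<close> by simp
      finally show "c w = 0"
        by simp
    qed
  qed simp
  then show ?thesis
    unfolding fdim_def using card_image[OF inj] by simp
qed

section \<open>Homogeneous constant coefficient systems\<close>

definition homogeneous_of_order :: "nat \<Rightarrow> D list list \<Rightarrow> bool" where
  "homogeneous_of_order q A \<longleftrightarrow> (\<forall>row \<in> set A. \<forall>a \<in> set row. \<forall>\<alpha> \<in> Poly_Mapping.keys a. mdeg \<alpha> = q)"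

lemma opapp_cong:
  assumes "homogeneous_of_order q A"
    and "\<And>\<alpha> k. mdeg \<alpha> = q \<Longrightarrow> v (\<alpha> + \<nu>, k) = w (\<alpha> + \<nu>, k)"
  shows "opapp A v (\<nu>, \<tau>) = opapp A w (\<nu>, \<tau>)"
proof -
  have "mdeg \<alpha> = q" if "\<tau> < length A" "k < length (A ! \<tau>)" "\<alpha> \<in> Poly_Mapping.keys (A ! \<tau> ! k)" for k \<alpha>
    using assms(1) that unfolding homogeneous_of_order_def by (meson nth_mem)
  then show ?thesis
    unfolding opapp_def using assms(2) by (auto intro!: sum.cong)
qed

lemma opapp_zero [simp]: "opapp A 0 p = 0"
  by (simp add: opapp_def split: prod.split)

lemma opapp_beyond: "length A \<le> \<tau> \<Longrightarrow> opapp A v (\<nu>, \<tau>) = 0"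
  by (simp add: opapp_def)

lemma opapp_shiftj: "opapp A (shiftj \<rho> v) (\<nu>, \<tau>) = opapp A v (\<nu> + \<rho>, \<tau>)"
  by (simp add: opapp_def add.assoc)

lemma opapp_add: "opapp A (x + y) p = opapp A x p + opapp A y p"
  by (simp add: opapp_def sum.distrib algebra_simps split: prod.split)

lemma opapp_diff: "opapp A (x - y) p = opapp A x p - opapp A y p"
  by (simp add: opapp_def sum_subtractf algebra_simps split: prod.split)

lemma opapp_vanish:
  assumes "homogeneous_of_order q A" "\<And>\<mu> c. mdeg \<mu> = q + mdeg \<nu> \<Longrightarrow> v (\<mu>, c) = 0"
  shows "opapp A v (\<nu>, \<tau>) = 0"
  using opapp_cong[OF assms(1), of v \<nu> 0 \<tau>] assms(2) by simp

lemma trunc_Rsys_Suc: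
  assumes hom: "homogeneous_of_order q A" and v: "v \<in> Rsys A m q (Suc r)"
  shows "trunc (q + r) v \<in> Rsys A m q r"
proof -
  have Jv: "v \<in> Jsp m (q + Suc r)"
    using v unfolding Rsys_def by blast
  have "trunc (q + r) v \<in> Jsp m (q + r)"
  proof (rule JspI)
    fix \<mu> c assume "\<not> (mdeg \<mu> \<le> q + r \<and> c < m)"
    then show "trunc (q + r) v (\<mu>, c) = 0"
      using Jsp_vanish[OF Jv, of \<mu> c] by (auto simp: trunc_def)
  qed
  moreover have "opapp A (trunc (q + r) v) (\<nu>, \<tau>) = 0" if "mdeg \<nu> \<le> r" "\<tau> < length A" for \<nu> \<tau>
  proof -
    have "opapp A (trunc (q + r) v) (\<nu>, \<tau>) = opapp A v (\<nu>, \<tau>)"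
      using that by (intro opapp_cong[OF hom]) (simp add: trunc_def)
    also have "\<dots> = 0"
      using v that(2) le_SucI[OF that(1)] unfolding Rsys_def by blast
    finally show ?thesis .
  qed
  ultimately show ?thesis
    unfolding Rsys_def by blast
qed

text \<open>By homogeneity, the equations differentiated \<open>r + 1\<close> times only involve coefficients of degree
  \<open>q + r + 1\<close>, which vanish on \<open>R\<^sub>q\<^sub>+\<^sub>r\<close>.\<close>

lemma Rsys_subset_Rsys_Suc:
  assumes hom: "homogeneous_of_order q A"
  shows "Rsys A m q r \<subseteq> Rsys A m q (Suc r)"
proof
  fix w assume w: "w \<in> Rsys A m q r"
  then have J: "w \<in> Jsp m (q + r)"
    unfolding Rsys_def by blast
  then have "w \<in> Jsp m (q + Suc r)"
    using Jsp_mono[of "q + r" "q + Suc r"] by auto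
  moreover have "opapp A w (\<nu>, \<tau>) = 0" if "mdeg \<nu> \<le> Suc r" "\<tau> < length A" for \<nu> \<tau>
  proof (cases "mdeg \<nu> \<le> r")
    case True
    then show ?thesis
      using w that unfolding Rsys_def by blast
  next
    case False
    then show ?thesis
      by (intro opapp_vanish[OF hom]) (simp add: Jsp_vanish[OF J])
  qed
  ultimately show "w \<in> Rsys A m q (Suc r)"
    unfolding Rsys_def by blast
qed

lemma trunc_Jsp: "w \<in> Jsp m k \<Longrightarrow> trunc k w = w"
  by (rule jet_eqI) (simp add: trunc_def Jsp_vanish)

theorem formally_integrable_homogeneous:
  assumes hom: "homogeneous_of_order q A"
  shows "formally_integrable A m q"
  unfolding formally_integrable_def
proof (intro allI set_eqI iffI)
  fix r w
  assume "w \<in> trunc (q + r) ` Rsys A m q (Suc r)"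
  then show "w \<in> Rsys A m q r"
    using trunc_Rsys_Suc[OF hom] by blast
next
  fix r w
  assume w: "w \<in> Rsys A m q r"
  then have "trunc (q + r) w = w"
    unfolding Rsys_def by (blast intro: trunc_Jsp)
  with w Rsys_subset_Rsys_Suc[OF hom] show "w \<in> trunc (q + r) ` Rsys A m q (Suc r)"
    by (metis image_eqI subsetD)
qed

lemma symb_homogeneous:
  assumes hom: "homogeneous_of_order q A"
  shows "symb A m q r = {v \<in> Ssp m (q + r). \<forall>\<nu> \<tau>. mdeg \<nu> = r \<longrightarrow> opapp A v (\<nu>, \<tau>) = 0}"
proof (intro set_eqI iffI)
  fix v assume "v \<in> symb A m q r"
  then have "v \<in> Ssp m (q + r)"
    and eq: "\<And>\<nu> \<tau>. mdeg \<nu> \<le> r \<Longrightarrow> \<tau> < length A \<Longrightarrow> opapp A v (\<nu>, \<tau>) = 0"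
    unfolding symb_def Rsys_def by blast+
  moreover have "opapp A v (\<nu>, \<tau>) = 0" if "mdeg \<nu> = r" for \<nu> \<tau>
    using eq[of \<nu> \<tau>] opapp_beyond[of A \<tau> v \<nu>] that by (cases "\<tau> < length A") auto
  ultimately show "v \<in> {v \<in> Ssp m (q + r). \<forall>\<nu> \<tau>. mdeg \<nu> = r \<longrightarrow> opapp A v (\<nu>, \<tau>) = 0}"
    by blast
next
  fix v assume v: "v \<in> {v \<in> Ssp m (q + r). \<forall>\<nu> \<tau>. mdeg \<nu> = r \<longrightarrow> opapp A v (\<nu>, \<tau>) = 0}"
  have "opapp A v (\<nu>, \<tau>) = 0" if "mdeg \<nu> \<le> r" for \<nu> \<tau>
  proof (cases "mdeg \<nu> = r")
    case False
    have "v \<in> Ssp m (q + r)"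
      using v by blast
    with False show ?thesis
      using Ssp_vanish by (intro opapp_vanish[OF hom]) simp
  qed (use v in blast)
  then show "v \<in> symb A m q r"
    using v Ssp_subset_Jsp unfolding symb_def Rsys_def by blast
qed

lemma zero_in_symb: "0 \<in> symb A m q r"
  unfolding symb_def Rsys_def using Ssp_subset_Jsp[of m "q + r"] zero_in_Ssp[of m "q + r"] by auto

lemma prol_0: "G \<subseteq> Ssp m q \<Longrightarrow> prol m q G 0 = G"
  unfolding prol_def by (auto simp: shiftj_mdeg_0)

lemma prol_Suc: "prol m q G (Suc r) = prol m (q + r) (prol m q G r) 1"
proof (intro set_eqI iffI)
  fix v assume v: "v \<in> prol m q G (Suc r)"
  have "shiftj e v \<in> prol m q G r" if "mdeg e = 1" for e
  proof -
    have "shiftj \<nu> (shiftj e v) \<in> G" if "mdeg \<nu> = r" for \<nu>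
    proof -
      have "mdeg (\<nu> + e) = Suc r"
        using \<open>mdeg e = 1\<close> that by simp
      then show ?thesis
        using v unfolding prol_def shiftj_shiftj by blast
    qed
    moreover have "shiftj e v \<in> Ssp m (q + r)"
      using v \<open>mdeg e = 1\<close> shiftj_Ssp[of v m "q + r" 1 e] unfolding prol_def by simp
    ultimately show ?thesis
      unfolding prol_def by blast
  qed
  with v show "v \<in> prol m (q + r) (prol m q G r) 1"
    unfolding prol_def by auto
next
  fix v assume v: "v \<in> prol m (q + r) (prol m q G r) 1"
  have "shiftj \<nu> v \<in> G" if deg: "mdeg \<nu> = Suc r" for \<nu>
  proof -
    have "mdeg \<nu> = r + 1"
      using deg by simp
    then obtain \<nu>1 e where "\<nu> = \<nu>1 + e" "mdeg \<nu>1 = r" "mdeg e = 1"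
      by (rule mdeg_split)
    moreover from v \<open>mdeg e = 1\<close> have "shiftj e v \<in> prol m q G r"
      unfolding prol_def by blast
    ultimately have "shiftj \<nu>1 (shiftj e v) \<in> G"
      unfolding prol_def by blast
    then show ?thesis
      using \<open>\<nu> = \<nu>1 + e\<close> by (simp add: shiftj_shiftj)
  qed
  with v show "v \<in> prol m q G (Suc r)"
    unfolding prol_def by auto
qed

lemma prol_zero_space: "prol m q {0} r = {0}"
proof (intro set_eqI iffI)
  fix v assume v: "v \<in> prol m q {0} r"
  have "v (\<mu>, c) = 0" for \<mu> c
  proof (cases "mdeg \<mu> = q + r")
    case True
    then obtain \<rho> \<nu> where "\<mu> = \<rho> + \<nu>" "mdeg \<rho> = q" "mdeg \<nu> = r"
      by (rule mdeg_split)
    from v \<open>mdeg \<nu> = r\<close> have "shiftj \<nu> v = 0"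
      unfolding prol_def by blast
    from fun_cong[OF this, of "(\<rho>, c)"] \<open>\<mu> = \<rho> + \<nu>\<close> show ?thesis
      by simp
  next
    case False
    then show ?thesis
      using v Ssp_vanish unfolding prol_def by blast
  qed
  then show "v \<in> {0}"
    by (simp add: jet_eqI)
qed (simp add: prol_def)

lemma prol_symb:
  assumes hom: "homogeneous_of_order q A"
  shows "prol m (q + k) (symb A m q k) r = symb A m q (k + r)"
proof (intro set_eqI iffI)
  fix v assume "v \<in> prol m (q + k) (symb A m q k) r"
  then have v: "v \<in> Ssp m (q + (k + r))" "\<And>\<nu>. mdeg \<nu> = r \<Longrightarrow> shiftj \<nu> v \<in> symb A m q k"
    unfolding prol_def by (auto simp: add.assoc)
  have "opapp A v (\<nu>, \<tau>) = 0" if deg: "mdeg \<nu> = k + r" for \<nu> \<tau>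
  proof -
    obtain \<nu>1 \<nu>2 where "\<nu> = \<nu>1 + \<nu>2" "mdeg \<nu>1 = k" "mdeg \<nu>2 = r"
      using mdeg_split[OF deg] by blast
    moreover have "opapp A (shiftj \<nu>2 v) (\<nu>1, \<tau>) = 0"
      using v(2)[OF \<open>mdeg \<nu>2 = r\<close>] \<open>mdeg \<nu>1 = k\<close> unfolding symb_homogeneous[OF hom] by blast
    ultimately show ?thesis
      by (simp add: opapp_shiftj)
  qed
  with v(1) show "v \<in> symb A m q (k + r)"
    unfolding symb_homogeneous[OF hom] by blast
next
  fix v assume v: "v \<in> symb A m q (k + r)"
  then have vS: "v \<in> Ssp m (q + k + r)"
    and eq: "\<And>\<nu> \<tau>. mdeg \<nu> = k + r \<Longrightarrow> opapp A v (\<nu>, \<tau>) = 0"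
    unfolding symb_homogeneous[OF hom] by (auto simp: add.assoc)
  have "shiftj \<nu> v \<in> symb A m q k" if "mdeg \<nu> = r" for \<nu>
  proof -
    have "opapp A (shiftj \<nu> v) (\<nu>', \<tau>) = 0" if "mdeg \<nu>' = k" for \<nu>' \<tau>
      using eq[of "\<nu>' + \<nu>" \<tau>] that \<open>mdeg \<nu> = r\<close> by (simp add: opapp_shiftj)
    moreover have "shiftj \<nu> v \<in> Ssp m (q + k)"
      using shiftj_Ssp[OF vS that] .
    ultimately show ?thesis
      unfolding symb_homogeneous[OF hom] by blast
  qed
  with vS show "v \<in> prol m (q + k) (symb A m q k) r"
    unfolding prol_def by blast
qed

lemma not_involutive_if_prol_vanishes:
  assumes "v \<in> prol m q G r" "v \<noteq> 0" "prol m q G (Suc r) = {0}"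
  shows "\<not> involutive m q G"
proof
  assume "involutive m q G"
  then have "delta_exact_at 3 (prol m q G (Suc r)) (prol m q G r)"
    unfolding involutive_def acyclic_def by simp
  with not_delta_exact_at_3_zero_source[OF assms(1,2)] assms(3) show False
    by simp
qed

lemma symbol_map_apply: "symbol_map A t v (\<nu>, \<tau>) = (if mdeg \<nu> = t then opapp A v (\<nu>, \<tau>) else 0)"
  by (simp add: symbol_map_def)

lemma symbol_map_Ssp: "symbol_map A t v \<in> Ssp (length A) t"
  by (rule SspI) (auto simp: symbol_map_apply opapp_beyond)

lemma symbol_map_shiftj:
  "mdeg \<nu> = d \<Longrightarrow> shiftj \<nu> (symbol_map A (t + d) v) = symbol_map A t (shiftj \<nu> v)"
  by (rule jet_eqI) (simp add: symbol_map_apply opapp_shiftj)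

lemma symbol_map_unit_shifts:
  "sh0 (symbol_map A (Suc t) v) = symbol_map A t (sh0 v)"
  "sh1 (symbol_map A (Suc t) v) = symbol_map A t (sh1 v)"
  "sh2 (symbol_map A (Suc t) v) = symbol_map A t (sh2 v)"
  using symbol_map_shiftj[of _ 1 A t v] by simp_all

lemma symbol_map_add: "symbol_map A t (x + y) = symbol_map A t x + symbol_map A t y"
  by (rule jet_eqI) (simp add: symbol_map_apply opapp_add)

lemma symbol_map_diff: "symbol_map A t (x - y) = symbol_map A t x - symbol_map A t y"
  by (rule jet_eqI) (simp add: symbol_map_apply opapp_diff)

lemma symbol_map_zero [simp]: "symbol_map A t 0 = 0"
  by (rule jet_eqI) (simp add: symbol_map_apply)

lemma symbol_map_eq_0_iff:
  assumes "homogeneous_of_order q A" "v \<in> Ssp m (q + t)"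
  shows "symbol_map A t v = 0 \<longleftrightarrow> v \<in> symb A m q t"
  unfolding symb_homogeneous[OF assms(1)] using assms(2)
  by (auto simp: fun_eq_iff symbol_map_apply)

lemma symbol_map_injective:
  assumes "homogeneous_of_order q A" "symb A m q t = {0}"
    and "x \<in> Ssp m (q + t)" "y \<in> Ssp m (q + t)" "symbol_map A t x = symbol_map A t y"
  shows "x = y"
proof -
  have "symbol_map A t (x - y) = 0"
    using assms(5) by (simp add: symbol_map_diff)
  then have "x - y \<in> symb A m q t"
    using symbol_map_eq_0_iff[OF assms(1) Ssp_diff[OF assms(3,4)]] by blast
  then show ?thesis
    using assms(2) by simp
qed

lemma hsp_subset_Ssp: "hsp A m q t \<subseteq> Ssp (length A) t"
  unfolding hsp_def using symbol_map_Ssp by blast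

lemma spencer_form0_symbol_map: "spencer (form0 (symbol_map A (Suc t) a)) =
    form1 (symbol_map A t (sh0 a)) (symbol_map A t (sh1 a)) (symbol_map A t (sh2 a))"
  by (simp only: spencer_form0 symbol_map_unit_shifts)

lemma spencer_form1_symbol_map:
  "spencer (form1 (symbol_map A (Suc t) a0) (symbol_map A (Suc t) a1) (symbol_map A (Suc t) a2)) =
    form2 (symbol_map A t (sh0 a1 - sh1 a0)) (symbol_map A t (sh0 a2 - sh2 a0))
      (symbol_map A t (sh1 a2 - sh2 a1))"
  by (simp only: spencer_form1 symbol_map_unit_shifts symbol_map_diff)

lemma spencer_form2_symbol_map:
  "spencer (form2 (symbol_map A (Suc t) a0) (symbol_map A (Suc t) a1) (symbol_map A (Suc t) a2)) =
    form3 (symbol_map A t (sh0 a2 - sh1 a1 + sh2 a0))"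
  by (simp only: spencer_form2 symbol_map_unit_shifts symbol_map_diff symbol_map_add)

lemma cross_derivative_in_symb:
  assumes hom: "homogeneous_of_order q A"
    and "x \<in> Ssp m (q + Suc t)" "y \<in> Ssp m (q + Suc t)" "mdeg e = 1" "mdeg e' = 1"
    and "shiftj e w = symbol_map A (Suc t) x" "shiftj e' w = symbol_map A (Suc t) y"
  shows "shiftj e y - shiftj e' x \<in> symb A m q t"
proof -
  have "symbol_map A t (shiftj e y - shiftj e' x) =
      shiftj e (symbol_map A (Suc t) y) - shiftj e' (symbol_map A (Suc t) x)"
    using symbol_map_shiftj[of _ 1 A t] assms(4,5) by (simp add: symbol_map_diff)
  also have "\<dots> = 0"
    unfolding assms(6,7)[symmetric] by (simp add: shiftj_commute)
  finally have "symbol_map A t (shiftj e y - shiftj e' x) = 0" .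
  moreover have "shiftj e y - shiftj e' x \<in> Ssp m (q + t)"
    using shiftj_Ssp[of _ m "q + t" 1] assms(2-5) by (simp add: Ssp_diff)
  ultimately show ?thesis
    using symbol_map_eq_0_iff[OF hom] by blast
qed

lemma hsp_Suc_subset_prol: "hsp A m q (Suc (Suc t)) \<subseteq> prol (length A) (Suc t) (hsp A m q (Suc t)) 1"
proof
  fix w assume "w \<in> hsp A m q (Suc (Suc t))"
  then obtain u where u: "u \<in> Ssp m (q + Suc (Suc t))" "w = symbol_map A (Suc (Suc t)) u"
    unfolding hsp_def by blast
  have "shiftj e w \<in> hsp A m q (Suc t)" if "mdeg e = 1" for e
    using symbol_map_shiftj[OF that, of A "Suc t" u] shiftj_Ssp[of u m "q + Suc t" 1 e] u that
    unfolding hsp_def by simp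
  then show "w \<in> prol (length A) (Suc t) (hsp A m q (Suc t)) 1"
    unfolding prol_def using u symbol_map_Ssp by simp
qed

text \<open>The prolongation of \<open>h\<^sub>t\<^sub>+\<^sub>1\<close> is \<open>h\<^sub>t\<^sub>+\<^sub>2\<close> as soon as there are no nonzero \<open>\<delta>\<close>-closed
  2-forms with values in \<open>g\<^sub>q\<^sub>+\<^sub>t\<close>: the cross derivatives of the preimages form such a 2-form.\<close>

lemma prol_hsp_Suc:
  assumes hom: "homogeneous_of_order q A"
    and no_closed: "\<And>\<omega>. \<omega> \<in> Forms 2 (symb A m q t) \<Longrightarrow> spencer \<omega> = 0 \<Longrightarrow> \<omega> = 0"
  shows "prol (length A) (Suc t) (hsp A m q (Suc t)) 1 = hsp A m q (Suc (Suc t))"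
proof (intro equalityI subsetI)
  fix w assume w: "w \<in> prol (length A) (Suc t) (hsp A m q (Suc t)) 1"
  have preimage: "\<exists>u \<in> Ssp m (q + Suc t). shiftj e w = symbol_map A (Suc t) u" if "mdeg e = 1" for e
    using w that unfolding prol_def hsp_def by blast
  obtain u0 where u0: "u0 \<in> Ssp m (q + Suc t)" "sh0 w = symbol_map A (Suc t) u0"
    using preimage[of "(Suc 0, 0, 0)"] by auto
  obtain u1 where u1: "u1 \<in> Ssp m (q + Suc t)" "sh1 w = symbol_map A (Suc t) u1"
    using preimage[of "(0, Suc 0, 0)"] by auto
  obtain u2 where u2: "u2 \<in> Ssp m (q + Suc t)" "sh2 w = symbol_map A (Suc t) u2"
    using preimage[of "(0, 0, Suc 0)"] by auto
  have "sh0 u1 - sh1 u0 \<in> symb A m q t"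
    by (rule cross_derivative_in_symb[OF hom u0(1) u1(1) _ _ u0(2) u1(2)]) simp_all
  moreover have "sh0 u2 - sh2 u0 \<in> symb A m q t"
    by (rule cross_derivative_in_symb[OF hom u0(1) u2(1) _ _ u0(2) u2(2)]) simp_all
  moreover have "sh1 u2 - sh2 u1 \<in> symb A m q t"
    by (rule cross_derivative_in_symb[OF hom u1(1) u2(1) _ _ u1(2) u2(2)]) simp_all
  ultimately have "spencer (form1 u0 u1 u2) \<in> Forms 2 (symb A m q t)"
    unfolding spencer_form1 Forms2_iff by blast
  then have "spencer (form1 u0 u1 u2) = 0"
    using no_closed spencer_spencer_form1 by blast
  then have "sh1 u0 = sh0 u1" "sh2 u0 = sh0 u2" "sh2 u1 = sh1 u2"
    unfolding spencer_form1 forms_zero(3)[symmetric] form2_eq_iff by simp_all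
  then obtain U where U: "U \<in> Ssp m (Suc (q + Suc t))" "sh0 U = u0" "sh1 U = u1" "sh2 U = u2"
    using Ssp_integrate u0(1) u1(1) u2(1) by blast
  have "w = symbol_map A (Suc (Suc t)) U"
  proof (rule Ssp_eq_by_unit_shifts)
    show "w \<in> Ssp (length A) (Suc (Suc t))"
      using w unfolding prol_def by simp
    show "symbol_map A (Suc (Suc t)) U \<in> Ssp (length A) (Suc (Suc t))"
      by (rule symbol_map_Ssp)
  qed (simp_all only: symbol_map_unit_shifts U u0 u1 u2)
  then show "w \<in> hsp A m q (Suc (Suc t))"
    unfolding hsp_def using U(1) by simp
qed (use hsp_Suc_subset_prol in blast)

lemma prol_hsp:
  assumes hom: "homogeneous_of_order q A" and finite_type: "\<And>s. t \<le> s \<Longrightarrow> symb A m q s = {0}"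
  shows "prol (length A) (Suc t) (hsp A m q (Suc t)) r = hsp A m q (Suc t + r)"
proof (induction r)
  case 0
  show ?case
    using prol_0[OF hsp_subset_Ssp] by simp
next
  case (Suc r)
  have "prol (length A) (Suc t) (hsp A m q (Suc t)) (Suc r) =
      prol (length A) (Suc (t + r)) (hsp A m q (Suc (t + r))) 1"
    unfolding prol_Suc[of "length A" "Suc t" _ r] Suc.IH by simp
  also have "\<dots> = hsp A m q (Suc (Suc (t + r)))"
    using finite_type[of "t + r"] Forms_zero_space by (intro prol_hsp_Suc[OF hom]) auto
  finally show ?case
    by simp
qed

text \<open>Where \<open>\<sigma>\<^sub>t\<close> is injective, \<open>\<delta>\<close>-exactness of \<open>h\<close> is inherited from that of the full spaces
  \<open>S\<^sub>kT* \<otimes> E\<close> because the symbol maps commute with \<open>\<delta>\<close>.\<close>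

lemma delta_exact_hsp_1:
  assumes hom: "homogeneous_of_order q A" and g0: "symb A m q t = {0}"
  shows "delta_exact_at 1 (hsp A m q (Suc (Suc t))) (hsp A m q (Suc t))"
  unfolding delta_exact_at_def
proof (intro ballI impI)
  let ?\<sigma> = "symbol_map A"
  fix \<omega> assume "\<omega> \<in> Forms 1 (hsp A m q (Suc t))" and closed: "spencer \<omega> = 0"
  then obtain u0 u1 u2 where u: "u0 \<in> Ssp m (Suc (q + t))" "u1 \<in> Ssp m (Suc (q + t))"
      "u2 \<in> Ssp m (Suc (q + t))" and \<omega>: "\<omega> = form1 (?\<sigma> (Suc t) u0) (?\<sigma> (Suc t) u1) (?\<sigma> (Suc t) u2)"
    unfolding Forms1_iff hsp_def by auto
  have inj: "x = y" if "x \<in> Ssp m (q + t)" "y \<in> Ssp m (q + t)" "?\<sigma> t x = ?\<sigma> t y" for x y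
    using symbol_map_injective[OF hom g0] that by blast
  have "?\<sigma> t (sh0 u1) = ?\<sigma> t (sh1 u0)" "?\<sigma> t (sh0 u2) = ?\<sigma> t (sh2 u0)" "?\<sigma> t (sh1 u2) = ?\<sigma> t (sh2 u1)"
    using closed unfolding \<omega> spencer_form1_symbol_map forms_zero(3)[symmetric] form2_eq_iff
    by (simp_all add: symbol_map_diff)
  then have "sh0 u1 = sh1 u0" "sh0 u2 = sh2 u0" "sh1 u2 = sh2 u1"
    using inj unit_shifts_Ssp[OF u(1)] unit_shifts_Ssp[OF u(2)] unit_shifts_Ssp[OF u(3)] by blast+
  then have "form1 u0 u1 u2 \<in> Forms 1 (Ssp m (Suc (q + t)))" "spencer (form1 u0 u1 u2) = 0"
    using u unfolding Forms1_iff spencer_form1 by auto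
  then have "\<exists>\<theta> \<in> Forms (1 - 1) (Ssp m (Suc (Suc (q + t)))). spencer \<theta> = form1 u0 u1 u2"
    using delta_exact_Ssp_1 unfolding delta_exact_at_def by blast
  then obtain U where "U \<in> Ssp m (Suc (Suc (q + t)))" "spencer (form0 U) = form1 u0 u1 u2"
    by (auto simp: Forms0_iff)
  then have U: "U \<in> Ssp m (q + Suc (Suc t))" "sh0 U = u0" "sh1 U = u1" "sh2 U = u2"
    unfolding spencer_form0 form1_eq_iff by simp_all
  have "form0 (?\<sigma> (Suc (Suc t)) U) \<in> Forms 0 (hsp A m q (Suc (Suc t)))"
    unfolding Forms0_iff hsp_def using U(1) by auto
  moreover have "spencer (form0 (?\<sigma> (Suc (Suc t)) U)) = \<omega>"
    unfolding spencer_form0_symbol_map \<omega> U(2-4) ..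
  ultimately show "\<exists>\<theta> \<in> Forms (1 - 1) (hsp A m q (Suc (Suc t))). spencer \<theta> = \<omega>"
    by auto
qed

lemma delta_exact_hsp_2:
  assumes hom: "homogeneous_of_order q A" and g0: "symb A m q t = {0}"
  shows "delta_exact_at 2 (hsp A m q (Suc (Suc t))) (hsp A m q (Suc t))"
  unfolding delta_exact_at_def
proof (intro ballI impI)
  let ?\<sigma> = "symbol_map A"
  fix \<omega> assume "\<omega> \<in> Forms 2 (hsp A m q (Suc t))" and closed: "spencer \<omega> = 0"
  then obtain a0 a1 a2 where a: "a0 \<in> Ssp m (Suc (q + t))" "a1 \<in> Ssp m (Suc (q + t))"
      "a2 \<in> Ssp m (Suc (q + t))" and \<omega>: "\<omega> = form2 (?\<sigma> (Suc t) a0) (?\<sigma> (Suc t) a1) (?\<sigma> (Suc t) a2)"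
    unfolding Forms2_iff hsp_def by auto
  have "?\<sigma> t (sh0 a2 - sh1 a1 + sh2 a0) = ?\<sigma> t 0"
    using closed unfolding \<omega> spencer_form2_symbol_map forms_zero(4)[symmetric] form3_eq_iff by simp
  then have "sh0 a2 - sh1 a1 + sh2 a0 = 0"
    by (rule symbol_map_injective[OF hom g0, rotated 2])
      (use a unit_shifts_Ssp in \<open>simp_all add: Ssp_add Ssp_diff\<close>)
  then have "form2 a0 a1 a2 \<in> Forms 2 (Ssp m (Suc (q + t)))" "spencer (form2 a0 a1 a2) = 0"
    using a unfolding Forms2_iff spencer_form2 by auto
  then have "\<exists>\<theta> \<in> Forms (2 - 1) (Ssp m (Suc (Suc (q + t)))). spencer \<theta> = form2 a0 a1 a2"
    using delta_exact_Ssp_2 unfolding delta_exact_at_def by blast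
  then obtain \<theta> where "\<theta> \<in> Forms 1 (Ssp m (Suc (Suc (q + t))))" "spencer \<theta> = form2 a0 a1 a2"
    by auto
  then obtain b0 b1 b2 where b: "b0 \<in> Ssp m (q + Suc (Suc t))" "b1 \<in> Ssp m (q + Suc (Suc t))"
      "b2 \<in> Ssp m (q + Suc (Suc t))" and "spencer (form1 b0 b1 b2) = form2 a0 a1 a2"
    unfolding Forms1_iff by auto
  then have db: "sh0 b1 - sh1 b0 = a0" "sh0 b2 - sh2 b0 = a1" "sh1 b2 - sh2 b1 = a2"
    unfolding spencer_form1 form2_eq_iff by simp_all
  let ?\<theta> = "form1 (?\<sigma> (Suc (Suc t)) b0) (?\<sigma> (Suc (Suc t)) b1) (?\<sigma> (Suc (Suc t)) b2)"
  have "?\<theta> \<in> Forms 1 (hsp A m q (Suc (Suc t)))"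
    unfolding Forms1_iff hsp_def using b by auto
  moreover have "spencer ?\<theta> = \<omega>"
    unfolding spencer_form1_symbol_map \<omega> db ..
  ultimately show "\<exists>\<theta> \<in> Forms (2 - 1) (hsp A m q (Suc (Suc t))). spencer \<theta> = \<omega>"
    by auto
qed

theorem acyclic_2_hsp:
  assumes hom: "homogeneous_of_order q A" and finite_type: "\<And>s. t \<le> s \<Longrightarrow> symb A m q s = {0}"
  shows "acyclic 2 (length A) (Suc t) (hsp A m q (Suc t))"
  unfolding acyclic_def
proof (intro allI impI)
  fix r j :: nat assume "1 \<le> j \<and> j \<le> 2"
  then consider "j = 1" | "j = 2"
    by linarith
  then have "delta_exact_at j (hsp A m q (Suc (Suc (t + r)))) (hsp A m q (Suc (t + r)))"
    using delta_exact_hsp_1[OF hom] delta_exact_hsp_2[OF hom] finite_type[of "t + r"]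
    by cases simp_all
  then show "delta_exact_at j (prol (length A) (Suc t) (hsp A m q (Suc t)) (Suc r))
      (prol (length A) (Suc t) (hsp A m q (Suc t)) r)"
    using prol_hsp[OF hom finite_type] by simp
qed

section \<open>The example\<close>

abbreviation Phi_op :: "D list list" where
  "Phi_op \<equiv> [[opP], [opQ], [opR]]"

lemma lookup_dop: "Poly_Mapping.lookup (dop \<mu>) \<alpha> = (if \<alpha> = \<mu> then 1 else 0)"
  by (simp add: dop_def lookup_single)

lemma keys_dop [simp]: "Poly_Mapping.keys (dop \<mu>) = {\<mu>}"
  by (simp add: dop_def)

lemma lookup_opQ: "Poly_Mapping.lookup opQ \<alpha> = (if \<alpha> = (0,1,1) then 1 else if \<alpha> = (2,0,0) then -1 else 0)"
  by (auto simp: opQ_def lookup_minus lookup_dop)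

lemma keys_opQ: "Poly_Mapping.keys opQ = {(0,1,1), (2,0,0)}"
  by (auto simp: opQ_def in_keys_iff lookup_minus lookup_dop split: if_splits)

lemma homogeneous_Phi: "homogeneous_of_order 2 Phi_op"
  by (auto simp: homogeneous_of_order_def opP_def opR_def keys_opQ)

lemma opapp_Phi: "opapp Phi_op v (\<nu>, \<tau>) =
    (if \<tau> = 0 then v ((0,2,0) + \<nu>, 0)
     else if \<tau> = 1 then v ((0,1,1) + \<nu>, 0) - v ((2,0,0) + \<nu>, 0)
     else if \<tau> = 2 then v ((0,0,2) + \<nu>, 0) else 0)"
proof -
  have "\<tau> = 0 \<or> \<tau> = 1 \<or> \<tau> = 2 \<or> \<tau> \<ge> 3"
    by arith
  then show ?thesis
    by (elim disjE) (simp_all add: opapp_def opP_def opR_def keys_opQ lookup_opQ lookup_dop)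
qed

definition solves_Phi_at :: "jet \<Rightarrow> mi \<Rightarrow> bool" where
  "solves_Phi_at v \<nu> \<longleftrightarrow>
     v ((0,2,0) + \<nu>, 0) = 0 \<and> v ((0,1,1) + \<nu>, 0) = v ((2,0,0) + \<nu>, 0) \<and> v ((0,0,2) + \<nu>, 0) = 0"

lemma symb_Phi_iff:
  "v \<in> symb Phi_op 1 2 r \<longleftrightarrow> v \<in> Ssp 1 (2 + r) \<and> (\<forall>\<nu>. mdeg \<nu> = r \<longrightarrow> solves_Phi_at v \<nu>)"
proof -
  have "(\<forall>\<tau>. opapp Phi_op v (\<nu>, \<tau>) = 0) \<longleftrightarrow> solves_Phi_at v \<nu>" for \<nu>
  proof
    assume "\<forall>\<tau>. opapp Phi_op v (\<nu>, \<tau>) = 0"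
    from this[rule_format, of 0] this[rule_format, of 1] this[rule_format, of 2]
    show "solves_Phi_at v \<nu>"
      by (simp add: opapp_Phi solves_Phi_at_def)
  qed (simp add: opapp_Phi solves_Phi_at_def)
  then show ?thesis
    unfolding symb_homogeneous[OF homogeneous_Phi] by blast
qed

lemma symb_Phi_2: "symb Phi_op 1 2 2 = {0}"
proof (intro set_eqI iffI)
  fix v assume "v \<in> symb Phi_op 1 2 2"
  then have v: "v \<in> Ssp 1 4" "\<And>\<nu>. mdeg \<nu> = 2 \<Longrightarrow> solves_Phi_at v \<nu>"
    unfolding symb_Phi_iff by auto
  have "solves_Phi_at v (0,0,2)" "solves_Phi_at v (0,1,1)" "solves_Phi_at v (0,2,0)"
    "solves_Phi_at v (1,0,1)" "solves_Phi_at v (1,1,0)" "solves_Phi_at v (2,0,0)"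
    by (rule v(2); simp)+
  then have zero: "v (\<mu>, 0) = 0"
    if "\<mu> \<in> set [(a, b, 4 - a - b). a \<leftarrow> [0..<Suc 4], b \<leftarrow> [0..<Suc (4 - a)]]" for \<mu>
    using that by (auto simp: solves_Phi_at_def upt_rec eval_nat_numeral)
  have "v (\<mu>, c) = 0" for \<mu> c
  proof (cases "mdeg \<mu> = 4 \<and> c = 0")
    case True
    then show ?thesis
      using zero[OF mdeg_cases[of \<mu> 4]] by simp
  next
    case False
    then show ?thesis
      using Ssp_vanish[OF v(1)] by simp
  qed
  then show "v \<in> {0}"
    by (simp add: jet_eqI)
qed (unfold symb_Phi_iff, simp add: solves_Phi_at_def)

lemma symb_Phi_vanish:
  assumes "2 \<le> s"
  shows "symb Phi_op 1 2 s = {0}"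
proof -
  have "symb Phi_op 1 2 s = prol 1 (2 + 2) (symb Phi_op 1 2 2) (s - 2)"
    using prol_symb[OF homogeneous_Phi, of 1 2 "s - 2"] assms by (metis le_add_diff_inverse)
  also have "\<dots> = {0}"
    unfolding symb_Phi_2 by (rule prol_zero_space)
  finally show ?thesis .
qed

definition unit_jet :: "mi set \<Rightarrow> jet" where
  "unit_jet S = (\<lambda>(\<mu>, c). if c = 0 \<and> \<mu> \<in> S then 1 else 0)"

lemma unit_jet_apply [simp]: "unit_jet S (\<mu>, c) = (if c = 0 \<and> \<mu> \<in> S then 1 else 0)"
  by (simp add: unit_jet_def)

abbreviation g3_gen :: jet where "g3_gen \<equiv> unit_jet {(3,0,0), (1,1,1)}"
abbreviation g2_gen1 :: jet where "g2_gen1 \<equiv> unit_jet {(2,0,0), (0,1,1)}"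
abbreviation g2_gen2 :: jet where "g2_gen2 \<equiv> unit_jet {(1,1,0)}"
abbreviation g2_gen3 :: jet where "g2_gen3 \<equiv> unit_jet {(1,0,1)}"

lemma symb_Phi_1_iff: "v \<in> symb Phi_op 1 2 1 \<longleftrightarrow> (\<exists>k. v = (\<lambda>x. k * g3_gen x))"
proof
  assume "v \<in> symb Phi_op 1 2 1"
  then have v: "v \<in> Ssp 1 3" "\<And>\<nu>. mdeg \<nu> = 1 \<Longrightarrow> solves_Phi_at v \<nu>"
    unfolding symb_Phi_iff by auto
  have "solves_Phi_at v (1,0,0)" "solves_Phi_at v (0,1,0)" "solves_Phi_at v (0,0,1)"
    by (rule v(2); simp)+
  then have coeff: "v (\<mu>, 0) = v ((3,0,0), 0) * g3_gen (\<mu>, 0)"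
    if "\<mu> \<in> set [(a, b, 3 - a - b). a \<leftarrow> [0..<Suc 3], b \<leftarrow> [0..<Suc (3 - a)]]" for \<mu>
    using that by (auto simp: solves_Phi_at_def upt_rec eval_nat_numeral)
  have "v = (\<lambda>x. v ((3,0,0), 0) * g3_gen x)"
  proof (rule jet_eqI)
    fix \<mu> c
    show "v (\<mu>, c) = v ((3,0,0), 0) * g3_gen (\<mu>, c)"
    proof (cases "mdeg \<mu> = 3 \<and> c = 0")
      case True
      then show ?thesis
        using coeff[OF mdeg_cases[of \<mu> 3]] by simp
    next
      case False
      then show ?thesis
        using Ssp_vanish[OF v(1), of \<mu> c] by auto
    qed
  qed
  then show "\<exists>k. v = (\<lambda>x. k * g3_gen x)" ..
next
  assume "\<exists>k. v = (\<lambda>x. k * g3_gen x)"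
  then obtain k where k: "v = (\<lambda>x. k * g3_gen x)" ..
  have "v \<in> Ssp 1 3"
    by (rule SspI) (auto simp: k)
  moreover have "solves_Phi_at v \<nu>" if "mdeg \<nu> = 1" for \<nu>
    using mdeg_cases[OF that] by (auto simp: k solves_Phi_at_def)
  ultimately show "v \<in> symb Phi_op 1 2 1"
    unfolding symb_Phi_iff by simp
qed

lemma symb_Phi_0_iff:
  "v \<in> symb Phi_op 1 2 0 \<longleftrightarrow> (\<exists>a b c. v = (\<lambda>x. a * g2_gen1 x + b * g2_gen2 x + c * g2_gen3 x))"
proof
  assume "v \<in> symb Phi_op 1 2 0"
  then have v: "v \<in> Ssp 1 2" "solves_Phi_at v 0"
    unfolding symb_Phi_iff using mdeg_eq_0_iff by auto
  let ?w = "\<lambda>x. v ((2,0,0), 0) * g2_gen1 x + v ((1,1,0), 0) * g2_gen2 x + v ((1,0,1), 0) * g2_gen3 x"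
  have coeff: "v (\<mu>, 0) = ?w (\<mu>, 0)"
    if "\<mu> \<in> set [(a, b, 2 - a - b). a \<leftarrow> [0..<Suc 2], b \<leftarrow> [0..<Suc (2 - a)]]" for \<mu>
    using that v(2) by (auto simp: solves_Phi_at_def zero_mi upt_rec eval_nat_numeral)
  have "v = ?w"
  proof (rule jet_eqI)
    fix \<mu> c
    show "v (\<mu>, c) = ?w (\<mu>, c)"
    proof (cases "mdeg \<mu> = 2 \<and> c = 0")
      case True
      then show ?thesis
        using coeff[OF mdeg_cases[of \<mu> 2]] by simp
    next
      case False
      then show ?thesis
        using Ssp_vanish[OF v(1), of \<mu> c] by auto
    qed
  qed
  then show "\<exists>a b c. v = (\<lambda>x. a * g2_gen1 x + b * g2_gen2 x + c * g2_gen3 x)"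
    by blast
next
  assume "\<exists>a b c. v = (\<lambda>x. a * g2_gen1 x + b * g2_gen2 x + c * g2_gen3 x)"
  then obtain a b c where abc: "v = (\<lambda>x. a * g2_gen1 x + b * g2_gen2 x + c * g2_gen3 x)"
    by blast
  have "v \<in> Ssp 1 2"
    by (rule SspI) (auto simp: abc)
  moreover have "solves_Phi_at v 0"
    by (simp add: abc solves_Phi_at_def zero_mi)
  ultimately show "v \<in> symb Phi_op 1 2 0"
    unfolding symb_Phi_iff using mdeg_eq_0_iff by auto
qed

lemma g3_gen_in_g3: "g3_gen \<in> symb Phi_op 1 2 1"
  unfolding symb_Phi_1_iff by (rule exI[of _ 1]) simp

lemma g3_gen_nonzero: "g3_gen \<noteq> 0"
  by (metis unit_jet_apply insertI1 zero_fun_apply zero_neq_one)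

lemma Forms2_g3_iff: "\<omega> \<in> Forms 2 (symb Phi_op 1 2 1) \<longleftrightarrow>
    (\<exists>k0 k1 k2. \<omega> = form2 (\<lambda>x. k0 * g3_gen x) (\<lambda>x. k1 * g3_gen x) (\<lambda>x. k2 * g3_gen x))"
  unfolding Forms2_iff Bex_def symb_Phi_1_iff by blast

lemma Forms3_g2_iff: "\<omega> \<in> Forms 3 (symb Phi_op 1 2 0) \<longleftrightarrow>
    (\<exists>a b c. \<omega> = form3 (\<lambda>x. a * g2_gen1 x + b * g2_gen2 x + c * g2_gen3 x))"
  unfolding Forms3_iff Bex_def symb_Phi_0_iff by blast

lemma spencer_form2_g3:
  "spencer (form2 (\<lambda>x. k0 * g3_gen x) (\<lambda>x. k1 * g3_gen x) (\<lambda>x. k2 * g3_gen x)) =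
    form3 (\<lambda>x. k2 * g2_gen1 x + k0 * g2_gen2 x + (- k1) * g2_gen3 x)"
proof -
  have "sh0 (\<lambda>x. k2 * g3_gen x) - sh1 (\<lambda>x. k1 * g3_gen x) + sh2 (\<lambda>x. k0 * g3_gen x) =
      (\<lambda>x. k2 * g2_gen1 x + k0 * g2_gen2 x + (- k1) * g2_gen3 x)"
  proof (rule jet_eqI)
    fix \<mu> :: mi and c :: nat
    obtain a b d where "\<mu> = (a, b, d)"
      by (cases \<mu>)
    then show "(sh0 (\<lambda>x. k2 * g3_gen x) - sh1 (\<lambda>x. k1 * g3_gen x) + sh2 (\<lambda>x. k0 * g3_gen x)) (\<mu>, c)
        = k2 * g2_gen1 (\<mu>, c) + k0 * g2_gen2 (\<mu>, c) + (- k1) * g2_gen3 (\<mu>, c)"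
      by auto
  qed
  then show ?thesis
    by (simp only: spencer_form2)
qed

lemma bij_betw_spencer_g3_g2: "bij_betw spencer (Forms 2 (symb Phi_op 1 2 1)) (Forms 3 (symb Phi_op 1 2 0))"
  unfolding bij_betw_def
proof
  show "inj_on spencer (Forms 2 (symb Phi_op 1 2 1))"
  proof (rule inj_onI)
    fix \<omega> \<eta> assume "\<omega> \<in> Forms 2 (symb Phi_op 1 2 1)" "\<eta> \<in> Forms 2 (symb Phi_op 1 2 1)"
      and eq: "spencer \<omega> = spencer \<eta>"
    then obtain k0 k1 k2 l0 l1 l2 where
      \<omega>: "\<omega> = form2 (\<lambda>x. k0 * g3_gen x) (\<lambda>x. k1 * g3_gen x) (\<lambda>x. k2 * g3_gen x)" and
      \<eta>: "\<eta> = form2 (\<lambda>x. l0 * g3_gen x) (\<lambda>x. l1 * g3_gen x) (\<lambda>x. l2 * g3_gen x)"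
      unfolding Forms2_g3_iff by blast
    from eq have "(\<lambda>x. k2 * g2_gen1 x + k0 * g2_gen2 x + (- k1) * g2_gen3 x) =
        (\<lambda>x. l2 * g2_gen1 x + l0 * g2_gen2 x + (- l1) * g2_gen3 x)"
      unfolding \<omega> \<eta> spencer_form2_g3 form3_eq_iff .
    from fun_cong[OF this, of "((2,0,0), 0)"] fun_cong[OF this, of "((1,1,0), 0)"]
      fun_cong[OF this, of "((1,0,1), 0)"]
    show "\<omega> = \<eta>"
      unfolding \<omega> \<eta> by simp
  qed
  show "spencer ` Forms 2 (symb Phi_op 1 2 1) = Forms 3 (symb Phi_op 1 2 0)"
  proof (intro set_eqI iffI)
    fix \<eta> assume "\<eta> \<in> spencer ` Forms 2 (symb Phi_op 1 2 1)"
    then obtain k0 k1 k2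
      where "\<eta> = spencer (form2 (\<lambda>x. k0 * g3_gen x) (\<lambda>x. k1 * g3_gen x) (\<lambda>x. k2 * g3_gen x))"
      unfolding image_iff Bex_def Forms2_g3_iff by blast
    then show "\<eta> \<in> Forms 3 (symb Phi_op 1 2 0)"
      unfolding spencer_form2_g3 Forms3_g2_iff by blast
  next
    fix \<eta> assume "\<eta> \<in> Forms 3 (symb Phi_op 1 2 0)"
    then obtain a b c where \<eta>: "\<eta> = form3 (\<lambda>x. a * g2_gen1 x + b * g2_gen2 x + c * g2_gen3 x)"
      unfolding Forms3_g2_iff by blast
    have "\<eta> = spencer (form2 (\<lambda>x. b * g3_gen x) (\<lambda>x. (- c) * g3_gen x) (\<lambda>x. a * g3_gen x))"
      unfolding \<eta> spencer_form2_g3 by simp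
    moreover have "form2 (\<lambda>x. b * g3_gen x) (\<lambda>x. (- c) * g3_gen x) (\<lambda>x. a * g3_gen x) \<in> Forms 2 (symb Phi_op 1 2 1)"
      unfolding Forms2_g3_iff by blast
    ultimately show "\<eta> \<in> spencer ` Forms 2 (symb Phi_op 1 2 1)"
      by blast
  qed
qed

lemma fdim_g3: "fdim (symb Phi_op 1 2 1) = 1"
proof -
  have "fdim (symb Phi_op 1 2 1) = card (UNIV :: unit set)"
  proof (rule fdim_dual_basis[where b = "\<lambda>_. g3_gen" and p = "\<lambda>_. ((3,0,0), 0)"])
    show "(\<lambda>_. g3_gen) ` UNIV \<subseteq> symb Phi_op 1 2 1"
      using g3_gen_in_g3 by auto
    show "\<exists>k. v = (\<lambda>x. \<Sum>i\<in>(UNIV :: unit set). k i * g3_gen x)" if v: "v \<in> symb Phi_op 1 2 1" for v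
    proof -
      obtain k where "v = (\<lambda>x. k * g3_gen x)"
        using v unfolding symb_Phi_1_iff by blast
      then show ?thesis
        by (intro exI[of _ "\<lambda>_. k"]) (simp add: UNIV_unit)
    qed
  qed simp_all
  then show ?thesis
    by simp
qed

lemma fdim_Forms2_g3: "fdim (Forms 2 (symb Phi_op 1 2 1)) = 3"
proof -
  define b where "b i = (if i = 0 then form2 g3_gen 0 0 else if i = 1 then form2 0 g3_gen 0
      else form2 0 0 g3_gen)" for i :: nat
  define p where "p i = (if i = 0 then {0, 1} else if i = 1 then {0, 2} else {1, 2::nat}, (3, 0, 0) :: mi, 0 :: nat)"
    for i :: nat
  have "fdim (Forms 2 (symb Phi_op 1 2 1)) = card {0, 1, 2::nat}"
  proof (rule fdim_dual_basis[where b = b and p = p])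
    have "form2 g3_gen 0 0 \<in> Forms 2 (symb Phi_op 1 2 1)"
      "form2 0 g3_gen 0 \<in> Forms 2 (symb Phi_op 1 2 1)" "form2 0 0 g3_gen \<in> Forms 2 (symb Phi_op 1 2 1)"
      unfolding Forms2_iff using g3_gen_in_g3 zero_in_symb by blast+
    then show "b ` {0, 1, 2} \<subseteq> Forms 2 (symb Phi_op 1 2 1)"
      unfolding b_def by auto
    show "\<exists>k. \<omega> = (\<lambda>x. \<Sum>i\<in>{0, 1, 2}. k i * b i x)" if \<omega>_in: "\<omega> \<in> Forms 2 (symb Phi_op 1 2 1)" for \<omega>
    proof -
      obtain k0 k1 k2 where \<omega>: "\<omega> = form2 (\<lambda>x. k0 * g3_gen x) (\<lambda>x. k1 * g3_gen x) (\<lambda>x. k2 * g3_gen x)"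
        using \<omega>_in unfolding Forms2_g3_iff by blast
      show ?thesis
        by (rule exI[of _ "\<lambda>i. if i = 0 then k0 else if i = 1 then k1 else k2"])
          (auto simp: \<omega> b_def fun_eq_iff)
    qed
  qed (auto simp: b_def p_def insert_eq_iff)
  then show ?thesis
    by simp
qed

lemma fdim_Forms3_g2: "fdim (Forms 3 (symb Phi_op 1 2 0)) = 3"
proof -
  define b where "b i = form3 (if i = 0 then g2_gen1 else if i = 1 then g2_gen2 else g2_gen3)" for i :: nat
  define p where "p i = ({0, 1, 2::nat}, if i = 0 then (2, 0, 0) else if i = 1 then (1, 1, 0) else (1, 0, 1) :: mi, 0 :: nat)"
    for i :: nat
  have "fdim (Forms 3 (symb Phi_op 1 2 0)) = card {0, 1, 2::nat}"
  proof (rule fdim_dual_basis[where b = b and p = p])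
    have "g2_gen1 \<in> symb Phi_op 1 2 0" "g2_gen2 \<in> symb Phi_op 1 2 0" "g2_gen3 \<in> symb Phi_op 1 2 0"
      unfolding symb_Phi_0_iff
      by (rule exI[of _ 1], rule exI[of _ 0], rule exI[of _ 0], simp,
          rule exI[of _ 0], rule exI[of _ 1], rule exI[of _ 0], simp,
          rule exI[of _ 0], rule exI[of _ 0], rule exI[of _ 1], simp)
    then have "form3 g2_gen1 \<in> Forms 3 (symb Phi_op 1 2 0)"
      "form3 g2_gen2 \<in> Forms 3 (symb Phi_op 1 2 0)" "form3 g2_gen3 \<in> Forms 3 (symb Phi_op 1 2 0)"
      unfolding Forms3_iff by blast+
    then show "b ` {0, 1, 2} \<subseteq> Forms 3 (symb Phi_op 1 2 0)"
      unfolding b_def by auto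
    show "\<exists>k. \<omega> = (\<lambda>x. \<Sum>i\<in>{0, 1, 2}. k i * b i x)" if \<omega>_in: "\<omega> \<in> Forms 3 (symb Phi_op 1 2 0)" for \<omega>
    proof -
      obtain a1 a2 a3 where \<omega>: "\<omega> = form3 (\<lambda>x. a1 * g2_gen1 x + a2 * g2_gen2 x + a3 * g2_gen3 x)"
        using \<omega>_in unfolding Forms3_g2_iff by blast
      show ?thesis
        by (rule exI[of _ "\<lambda>i. if i = 0 then a1 else if i = 1 then a2 else a3"])
          (auto simp: \<omega> b_def fun_eq_iff)
    qed
  qed (auto simp: b_def p_def)
  then show ?thesis
    by simp
qed

lemma prol_g3: "prol 1 3 (symb Phi_op 1 2 1) r = symb Phi_op 1 2 (Suc r)"
  using prol_symb[OF homogeneous_Phi, of 1 1 r] by simp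

lemma spencer_injective_Forms1_g3:
  assumes "\<omega> \<in> Forms 1 (symb Phi_op 1 2 1)" "spencer \<omega> = 0"
  shows "\<omega> = 0"
proof -
  obtain k0 k1 k2 where \<omega>: "\<omega> = form1 (\<lambda>x. k0 * g3_gen x) (\<lambda>x. k1 * g3_gen x) (\<lambda>x. k2 * g3_gen x)"
    using assms(1) unfolding Forms1_iff Bex_def symb_Phi_1_iff by blast
  from assms(2) have "spencer \<omega> ({0, 1}, (2,0,0), 0) = 0" "spencer \<omega> ({0, 2}, (2,0,0), 0) = 0"
    "spencer \<omega> ({0, 1}, (1,0,1), 0) = 0"
    by simp_all
  then have "k1 = 0" "k2 = 0" "k0 = 0"
    unfolding \<omega> spencer_form1 by (simp_all add: insert_eq_iff)
  then show ?thesis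
    unfolding \<omega> using forms_zero(2)[unfolded zero_fun_def] by (simp add: zero_fun_def)
qed

lemma spencer_injective_Forms2_g3:
  assumes "\<omega> \<in> Forms 2 (symb Phi_op 1 2 1)" "spencer \<omega> = 0"
  shows "\<omega> = 0"
proof -
  have "0 \<in> Forms 2 (symb Phi_op 1 2 1)"
    by (rule zero_in_Forms[OF zero_in_symb])
  then show ?thesis
    using bij_betw_spencer_g3_g2 assms unfolding bij_betw_def inj_on_def by simp
qed

lemma acyclic_2_g3: "acyclic 2 1 3 (symb Phi_op 1 2 1)"
  unfolding acyclic_def prol_g3
proof (intro allI impI)
  fix r j :: nat assume j: "1 \<le> j \<and> j \<le> 2"
  have g0: "symb Phi_op 1 2 (Suc (Suc r)) = {0}"
    by (rule symb_Phi_vanish) simp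
  show "delta_exact_at j (symb Phi_op 1 2 (Suc (Suc r))) (symb Phi_op 1 2 (Suc r))"
  proof (cases r)
    case 0
    from j consider "j = 1" | "j = 2"
      by linarith
    then have "delta_exact_at j {0} (symb Phi_op 1 2 1)"
    proof cases
      case 1
      show ?thesis
        unfolding 1 by (rule delta_exact_at_zero_source) (rule spencer_injective_Forms1_g3)
    next
      case 2
      show ?thesis
        unfolding 2 by (rule delta_exact_at_zero_source) (rule spencer_injective_Forms2_g3)
    qed
    then show ?thesis
      using 0 g0 by simp
  next
    case (Suc r')
    then show ?thesis
      using symb_Phi_vanish[of "Suc r"] zero_in_symb delta_exact_at_zero_mid by simp
  qed
qed

lemma not_involutive_g2: "\<not> involutive 1 2 (symb Phi_op 1 2 0)"
proof (rule not_involutive_if_prol_vanishes)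
  show "g3_gen \<in> prol 1 2 (symb Phi_op 1 2 0) 1"
    using prol_symb[OF homogeneous_Phi, of 1 0 1] g3_gen_in_g3 by simp
  show "prol 1 2 (symb Phi_op 1 2 0) (Suc 1) = {0}"
    using prol_symb[OF homogeneous_Phi, of 1 0 2] symb_Phi_2 by (simp add: numeral_2_eq_2)
qed (rule g3_gen_nonzero)

lemma not_involutive_g3: "\<not> involutive 1 3 (symb Phi_op 1 2 1)"
proof (rule not_involutive_if_prol_vanishes)
  show "g3_gen \<in> prol 1 3 (symb Phi_op 1 2 1) 0"
    using prol_symb[OF homogeneous_Phi, of 1 1 0] g3_gen_in_g3 by simp
  show "prol 1 3 (symb Phi_op 1 2 1) (Suc 0) = {0}"
    using prol_g3 symb_Phi_2 by (simp add: numeral_2_eq_2)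
qed (rule g3_gen_nonzero)

lemma h3_eq_prol_h2: "hsp Phi_op 1 2 3 = prol 3 2 (hsp Phi_op 1 2 2) 1"
  using prol_hsp_Suc[OF homogeneous_Phi, of 1 1] spencer_injective_Forms2_g3
  by (simp add: numeral_3_eq_3 numeral_2_eq_2)

lemma acyclic_2_h3: "acyclic 2 3 3 (hsp Phi_op 1 2 3)"
  using acyclic_2_hsp[OF homogeneous_Phi, of 2 1] symb_Phi_vanish by (simp add: numeral_3_eq_3)

definition h2_witness :: jet where
  "h2_witness = unit_jet {(4,0,0), (2,1,1)}"

lemma h2_witness_Ssp: "h2_witness \<in> Ssp 1 4"
  unfolding h2_witness_def by (auto intro!: SspI split: if_splits)

lemma sh0_h2_witness: "sh0 h2_witness = g3_gen"
  unfolding h2_witness_def by (auto intro!: jet_eqI)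

text \<open>Because \<open>\<sigma>\<^sub>1\<close> kills \<open>g\<^sub>3\<close>, the 2-form \<open>dx\<^sup>2 \<wedge> dx\<^sup>3 \<otimes> \<sigma>\<^sub>2(h2_witness)\<close> is \<open>\<delta>\<close>-closed.\<close>

lemma closed_form_h2:
  "form2 0 0 (symbol_map Phi_op 2 h2_witness) \<in> Forms 2 (hsp Phi_op 1 2 2)"
  "spencer (form2 0 0 (symbol_map Phi_op 2 h2_witness)) = 0"
proof -
  have "0 \<in> hsp Phi_op 1 2 2" "symbol_map Phi_op 2 h2_witness \<in> hsp Phi_op 1 2 2"
    unfolding hsp_def using h2_witness_Ssp zero_in_Ssp symbol_map_zero by (metis image_eqI, simp)
  then show "form2 0 0 (symbol_map Phi_op 2 h2_witness) \<in> Forms 2 (hsp Phi_op 1 2 2)"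
    unfolding Forms2_iff by blast
  have "g3_gen \<in> Ssp 1 (2 + 1)"
    using g3_gen_in_g3 unfolding symb_Phi_iff by blast
  then have "symbol_map Phi_op 1 g3_gen = 0"
    using symbol_map_eq_0_iff[OF homogeneous_Phi] g3_gen_in_g3 by blast
  then have "sh0 (symbol_map Phi_op 2 h2_witness) = 0"
    using symbol_map_unit_shifts(1)[of Phi_op 1 h2_witness] sh0_h2_witness by (simp add: numeral_2_eq_2)
  then show "spencer (form2 0 0 (symbol_map Phi_op 2 h2_witness)) = 0"
    by (simp add: spencer_form2)
qed

text \<open>A \<open>\<delta>\<close>-preimage would exhibit \<open>h2_witness\<close> as the cross derivative \<open>d\<^sub>2t\<^sub>2 - d\<^sub>3t\<^sub>1\<close> with
  \<open>d\<^sub>1t\<^sub>1 = d\<^sub>2t\<^sub>0\<close> and \<open>d\<^sub>1t\<^sub>2 = d\<^sub>3t\<^sub>0\<close>, forcing \<open>d\<^sub>1h2_witness = 0\<close>.\<close>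

lemma not_delta_exact_h3_h2: "\<not> delta_exact_at 2 (hsp Phi_op 1 2 3) (hsp Phi_op 1 2 2)"
proof
  let ?\<sigma> = "symbol_map Phi_op"
  let ?E = h2_witness
  assume "delta_exact_at 2 (hsp Phi_op 1 2 3) (hsp Phi_op 1 2 2)"
  then have "\<exists>\<theta> \<in> Forms (2 - 1) (hsp Phi_op 1 2 3). spencer \<theta> = form2 0 0 (?\<sigma> 2 ?E)"
    using closed_form_h2 unfolding delta_exact_at_def by blast
  then obtain \<theta> where "\<theta> \<in> Forms 1 (hsp Phi_op 1 2 3)" "spencer \<theta> = form2 0 0 (?\<sigma> 2 ?E)"
    by auto
  then obtain t0 t1 t2 where t: "t0 \<in> Ssp 1 5" "t1 \<in> Ssp 1 5" "t2 \<in> Ssp 1 5"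
    and "spencer (form1 (?\<sigma> 3 t0) (?\<sigma> 3 t1) (?\<sigma> 3 t2)) = form2 0 0 (?\<sigma> 2 ?E)"
    unfolding Forms1_iff hsp_def by auto
  then have eqs: "?\<sigma> 2 (sh0 t1 - sh1 t0) = ?\<sigma> 2 0" "?\<sigma> 2 (sh0 t2 - sh2 t0) = ?\<sigma> 2 0"
    "?\<sigma> 2 (sh1 t2 - sh2 t1) = ?\<sigma> 2 ?E"
    using spencer_form1_symbol_map[of Phi_op 2] by (simp_all add: form2_eq_iff)
  have \<sigma>_inj: "x = y" if "x \<in> Ssp 1 4" "y \<in> Ssp 1 4" "?\<sigma> 2 x = ?\<sigma> 2 y" for x y
    by (rule symbol_map_injective[OF homogeneous_Phi symb_Phi_2]) (use that in simp_all)
  have sh: "sh0 t \<in> Ssp 1 4" "sh1 t \<in> Ssp 1 4" "sh2 t \<in> Ssp 1 4" if "t \<in> Ssp 1 5" for t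
    using unit_shifts_Ssp[of t 1 4] that by simp_all
  have "sh0 t1 - sh1 t0 = 0" "sh0 t2 - sh2 t0 = 0" "sh1 t2 - sh2 t1 = ?E"
    by (rule \<sigma>_inj[OF _ _ eqs(1)] \<sigma>_inj[OF _ _ eqs(2)] \<sigma>_inj[OF _ _ eqs(3)];
        use h2_witness_Ssp sh t in \<open>simp add: Ssp_diff\<close>)+
  then have cross: "sh0 t1 = sh1 t0" "sh0 t2 = sh2 t0" "sh1 t2 - sh2 t1 = ?E"
    by simp_all
  have "sh0 ?E = sh1 (sh0 t2) - sh2 (sh0 t1)"
    unfolding cross(3)[symmetric] shiftj_diff by (simp only: shiftj_commute)
  also have "\<dots> = 0"
    unfolding cross(1,2) by (simp add: shiftj_commute)
  finally show False
    using sh0_h2_witness g3_gen_nonzero by simp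
qed

lemma not_acyclic_h2: "\<not> acyclic 2 3 2 (hsp Phi_op 1 2 2)"
proof
  assume "acyclic 2 3 2 (hsp Phi_op 1 2 2)"
  then have "delta_exact_at 2 (prol 3 2 (hsp Phi_op 1 2 2) 1) (prol 3 2 (hsp Phi_op 1 2 2) 0)"
    unfolding acyclic_def by simp
  then show False
    using not_delta_exact_h3_h2 h3_eq_prol_h2 prol_0[OF hsp_subset_Ssp[of Phi_op 1 2 2]]
    by (simp add: numeral_3_eq_3)
qed

section \<open>Compatibility conditions\<close>

abbreviation Psi_op :: "D list list" where
  "Psi_op \<equiv> [[0, - opR, opQ], [opR, 0, - opP], [- opQ, opP, 0]]"

abbreviation Omega_op :: "D list list" where
  "Omega_op \<equiv> [[opP, opQ, opR]]"

lemma lookup_times_dop: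
  "Poly_Mapping.lookup (f * dop \<nu>) \<mu> = (\<Sum>l. Poly_Mapping.lookup f l when \<mu> = l + \<nu>)"
proof -
  have dop: "(\<Sum>q. Poly_Mapping.lookup (dop \<nu>) q when \<mu> = l + q) = (1 when \<mu> = l + \<nu>)" for l
  proof -
    have "(\<Sum>q. Poly_Mapping.lookup (dop \<nu>) q when \<mu> = l + q) = (\<Sum>q. (1 when \<mu> = l + q) when \<nu> = q)"
      by (rule Sum_any.cong) (simp add: lookup_dop when_def)
    also have "\<dots> = (1 when \<mu> = l + \<nu>)"
      by (rule Sum_any_when_equal')
    finally show ?thesis .
  qed
  show ?thesis
    unfolding lookup_mult dop by (simp add: mult_when)
qed

lemma lookup_times_dop_add [simp]: "Poly_Mapping.lookup (f * dop \<nu>) (\<rho> + \<nu>) = Poly_Mapping.lookup f \<rho>"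
proof -
  have "(\<Sum>l. Poly_Mapping.lookup f l when \<rho> + \<nu> = l + \<nu>) = (\<Sum>l. Poly_Mapping.lookup f l when l = \<rho>)"
    by (rule Sum_any.cong) (auto simp: when_def)
  then show ?thesis
    by (simp add: lookup_times_dop)
qed

lemma lookup_times_dop_eq_0: "(\<And>\<rho>. \<mu> \<noteq> \<rho> + \<nu>) \<Longrightarrow> Poly_Mapping.lookup (f * dop \<nu>) \<mu> = 0"
  by (simp add: lookup_times_dop when_def)

lemma times_dop_eq_0D: "f * dop \<nu> = 0 \<Longrightarrow> f = 0"
  by (metis lookup_times_dop_add lookup_zero poly_mapping_eqI)

lemma lookup_times_dop_triple:
  "Poly_Mapping.lookup (f * dop (x, y, z)) (a, b, c) =
    (if x \<le> a \<and> y \<le> b \<and> z \<le> c then Poly_Mapping.lookup f (a - x, b - y, c - z) else 0)"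
proof (cases "x \<le> a \<and> y \<le> b \<and> z \<le> c")
  case True
  then have "(a, b, c) = (a - x, b - y, c - z) + (x, y, z)"
    by simp
  with True show ?thesis
    by (metis lookup_times_dop_add)
next
  case False
  then have "(a, b, c) \<noteq> \<rho> + (x, y, z)" for \<rho>
    by (cases \<rho>) auto
  with False show ?thesis
    using lookup_times_dop_eq_0 by auto
qed

lemma lookup_times_opQ: "Poly_Mapping.lookup (f * opQ) (a, b, c) =
    (if 1 \<le> b \<and> 1 \<le> c then Poly_Mapping.lookup f (a, b - 1, c - 1) else 0)
    - (if 2 \<le> a then Poly_Mapping.lookup f (a - 2, b, c) else 0)"
proof -
  have "f * opQ = f * dop (0, 1, 1) - f * dop (2, 0, 0)"
    by (simp add: opQ_def algebra_simps)
  then show ?thesis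
    by (simp add: lookup_minus lookup_times_dop_triple del: One_nat_def)
qed

text \<open>The quotient by \<open>d\<^sub>\<nu>\<close> of the terms of \<open>X\<close> whose exponents are \<open>\<rho> + \<nu>\<close> with \<open>P \<rho>\<close>.\<close>

definition mono_quot :: "(mi \<Rightarrow> bool) \<Rightarrow> D \<Rightarrow> mi \<Rightarrow> D" where
  "mono_quot P X \<nu> = Abs_poly_mapping (\<lambda>\<rho>. if P \<rho> then Poly_Mapping.lookup X (\<rho> + \<nu>) else 0)"

lemma lookup_mono_quot:
  "Poly_Mapping.lookup (mono_quot P X \<nu>) \<rho> = (if P \<rho> then Poly_Mapping.lookup X (\<rho> + \<nu>) else 0)"
proof -
  have "{\<rho>. P \<rho> \<and> Poly_Mapping.lookup X (\<rho> + \<nu>) \<noteq> 0} \<subseteq> (\<lambda>\<rho>. \<rho> + \<nu>) -` Poly_Mapping.keys X"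
    by (auto simp: in_keys_iff)
  moreover have "finite ((\<lambda>\<rho>. \<rho> + \<nu>) -` Poly_Mapping.keys X)"
    by (rule finite_vimageI) (auto intro: injI)
  ultimately have "finite {\<rho>. P \<rho> \<and> Poly_Mapping.lookup X (\<rho> + \<nu>) \<noteq> 0}"
    by (rule finite_subset)
  moreover have "{\<rho>. (if P \<rho> then Poly_Mapping.lookup X (\<rho> + \<nu>) else 0) \<noteq> 0} =
      {\<rho>. P \<rho> \<and> Poly_Mapping.lookup X (\<rho> + \<nu>) \<noteq> 0}"
    by auto
  ultimately show ?thesis
    unfolding mono_quot_def by simp
qed

lemma eq_mono_quot_times_dop:
  assumes "\<And>\<mu>. (\<And>\<rho>. \<mu> \<noteq> \<rho> + \<nu>) \<Longrightarrow> Poly_Mapping.lookup X \<mu> = 0"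
  shows "X = mono_quot (\<lambda>_. True) X \<nu> * dop \<nu>"
proof (rule poly_mapping_eqI)
  fix \<mu>
  show "Poly_Mapping.lookup X \<mu> = Poly_Mapping.lookup (mono_quot (\<lambda>_. True) X \<nu> * dop \<nu>) \<mu>"
  proof (cases "\<exists>\<rho>. \<mu> = \<rho> + \<nu>")
    case True
    then show ?thesis
      by (auto simp: lookup_mono_quot)
  next
    case False
    then show ?thesis
      using assms lookup_times_dop_eq_0 by metis
  qed
qed

lemma syzygy_P_R:
  assumes "X * opP + Y * opR = 0"
  shows "\<exists>s. X = s * opR \<and> Y = - (s * opP)"
proof -
  have XP: "X * opP = - (Y * opR)"
    using assms by (simp add: eq_neg_iff_add_eq_0)
  have "Poly_Mapping.lookup X \<mu> = 0" if "\<And>\<rho>. \<mu> \<noteq> \<rho> + (0, 0, 2)" for \<mu>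
  proof -
    obtain a b c where \<mu>: "\<mu> = (a, b, c)"
      by (cases \<mu>)
    have "c < 2"
      using that[of "(a, b, c - 2)"] \<mu> by (cases "c < 2") auto
    have "Poly_Mapping.lookup X \<mu> = Poly_Mapping.lookup (X * opP) (a, b + 2, c)"
      by (simp add: opP_def lookup_times_dop_triple \<mu>)
    also have "\<dots> = 0"
      using \<open>c < 2\<close> by (simp add: XP opR_def lookup_times_dop_triple)
    finally show ?thesis .
  qed
  then obtain s where X: "X = s * opR"
    unfolding opR_def using eq_mono_quot_times_dop by blast
  have "(Y + s * opP) * opR = 0"
    using assms by (simp add: X algebra_simps)
  then have "Y + s * opP = 0"
    unfolding opR_def by (rule times_dop_eq_0D)
  with X show ?thesis
    by (auto simp: eq_neg_iff_add_eq_0)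
qed

text \<open>Every monomial of \<open>c\<^sub>1\<close> is divisible by \<open>d\<^sub>2\<^sub>2\<close> or \<open>d\<^sub>3\<^sub>3\<close>: otherwise \<open>c\<^sub>1 Q = - c\<^sub>0 P - c\<^sub>2 R\<close>
  would contain a monomial \<open>d\<^sub>1\<^sup>a d\<^sub>2\<^sup>b d\<^sub>3\<^sup>c\<close> with \<open>b, c < 2\<close>.\<close>

lemma syzygy_Q_coeff_in_ideal:
  assumes "c0 * opP + c1 * opQ + c2 * opR = 0"
  shows "\<exists>\<alpha> \<beta>. c1 = \<alpha> * opP + \<beta> * opR"
proof -
  define Z where "Z = c0 * opP + c2 * opR"
  have cQ: "c1 * opQ = - Z"
    using assms unfolding Z_def by (simp add: eq_neg_iff_add_eq_0 algebra_simps)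
  have Z: "Poly_Mapping.lookup Z (a, b, c) = 0" if "b < 2" "c < 2" for a b c
    using that by (simp add: Z_def lookup_add opP_def opR_def lookup_times_dop_triple)
  have off_diagonal: "Poly_Mapping.lookup c1 (a, b, c) = 0" if "b < 2" "c < 2" "\<not> (b = 1 \<and> c = 1)" for a b c
  proof -
    have "Poly_Mapping.lookup (c1 * opQ) (a + 2, b, c) = 0"
      using Z[of b c "a + 2"] that by (simp add: cQ)
    moreover have "\<not> (1 \<le> b \<and> 1 \<le> c)"
      using that by arith
    ultimately show ?thesis
      by (simp add: lookup_times_opQ del: One_nat_def)
  qed
  have low: "Poly_Mapping.lookup c1 (a, b, c) = 0" if "b < 2" "c < 2" for a b c
  proof (cases "b = 1 \<and> c = 1")
    case True
    have "Poly_Mapping.lookup (c1 * opQ) (a + 2, b, c) = 0"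
      using Z[of b c "a + 2"] that by (simp add: cQ)
    then have "Poly_Mapping.lookup c1 (a + 2, 0, 0) - Poly_Mapping.lookup c1 (a, b, c) = 0"
      using True by (simp add: lookup_times_opQ)
    moreover have "Poly_Mapping.lookup c1 (a + 2, 0, 0) = 0"
      by (rule off_diagonal) simp_all
    ultimately show ?thesis
      by simp
  next
    case False
    then show ?thesis
      using off_diagonal that by blast
  qed
  have Suc_Suc_diff_2: "Suc (Suc (n - 2)) = n" if "2 \<le> n" for n :: nat
    using that by arith
  have "c1 = mono_quot (\<lambda>_. True) c1 (0, 2, 0) * opP + mono_quot (\<lambda>\<rho>. fst (snd \<rho>) < 2) c1 (0, 0, 2) * opR"
  proof (rule poly_mapping_eqI)
    fix \<mu> :: mi
    obtain a b c where \<mu>: "\<mu> = (a, b, c)"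
      by (cases \<mu>)
    show "Poly_Mapping.lookup c1 \<mu> = Poly_Mapping.lookup (mono_quot (\<lambda>_. True) c1 (0, 2, 0) * opP +
        mono_quot (\<lambda>\<rho>. fst (snd \<rho>) < 2) c1 (0, 0, 2) * opR) \<mu>"
      using low[of b c a]
      by (auto simp: Suc_Suc_diff_2 \<mu> lookup_add opP_def opR_def lookup_times_dop_triple lookup_mono_quot)
  qed
  then show ?thesis
    by blast
qed

lemma syzygy_P_Q_R:
  assumes "c0 * opP + c1 * opQ + c2 * opR = 0"
  shows "\<exists>\<alpha> \<beta> s. c0 = s * opR - \<alpha> * opQ \<and> c1 = \<alpha> * opP + \<beta> * opR \<and> c2 = - (s * opP) - \<beta> * opQ"
proof -
  obtain \<alpha> \<beta> where c1: "c1 = \<alpha> * opP + \<beta> * opR"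
    using syzygy_Q_coeff_in_ideal[OF assms] by blast
  have "(c0 + \<alpha> * opQ) * opP + (c2 + \<beta> * opQ) * opR = c0 * opP + c1 * opQ + c2 * opR"
    by (simp add: c1 algebra_simps)
  also have "\<dots> = 0"
    by (rule assms)
  finally obtain s where s: "c0 + \<alpha> * opQ = s * opR" "c2 + \<beta> * opQ = - (s * opP)"
    using syzygy_P_R by blast
  then have "c0 = s * opR - \<alpha> * opQ" "c2 = - (s * opP) - \<beta> * opQ"
    by (simp_all add: algebra_simps)
  with c1 show ?thesis
    by blast
qed

lemma syzygy_Psi:
  assumes "- (c0 * opR) + c2 * opP = 0" "c0 * opQ - c1 * opP = 0"
  shows "\<exists>s. c0 = s * opP \<and> c1 = s * opQ \<and> c2 = s * opR"
proof -
  have "c2 * opP + (- c0) * opR = 0"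
    using assms(1) by (simp add: algebra_simps)
  then obtain s where s: "c2 = s * opR" "c0 = s * opP"
    using syzygy_P_R by fastforce
  have "(s * opQ - c1) * opP = 0"
    using assms(2) by (simp add: s(2) algebra_simps)
  then have "s * opQ - c1 = 0"
    unfolding opP_def by (rule times_dop_eq_0D)
  with s show ?thesis
    by auto
qed

lemma sum_lessThan_3: "(\<Sum>i<(3::nat). f i) = f 0 + f 1 + (f 2 :: D)"
  by (simp add: eval_nat_numeral)

lemma upt_0_3: "[0..<3] = [0, 1, 2]"
  by (simp add: eval_nat_numeral)

lemma list_length_3_cases: "length xs = 3 \<Longrightarrow> \<exists>a b c. xs = [a, b, c]"
  by (simp add: eval_nat_numeral length_Suc_conv) blast

lemma list_length_1_cases: "length xs = 1 \<Longrightarrow> \<exists>a. xs = [a]"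
  by (simp add: length_Suc_conv)

lemma length_3: "length [a, b, c] = 3"
  by simp

lemma rowmul_Phi: "rowmul [c0, c1, c2] Phi_op 1 = [c0 * opP + c1 * opQ + c2 * opR]"
  by (simp add: rowmul_def sum_lessThan_3)

lemma rowmul_Psi:
  "rowmul [c0, c1, c2] Psi_op 3 = [c1 * opR - c2 * opQ, - (c0 * opR) + c2 * opP, c0 * opQ - c1 * opP]"
  by (simp add: rowmul_def sum_lessThan_3 upt_0_3)

lemma rowmul_Omega: "rowmul [c0] Omega_op 3 = [c0 * opP, c0 * opQ, c0 * opR]"
  by (simp add: rowmul_def upt_0_3)

lemma generates_cc_Psi_Phi: "generates_cc Psi_op Phi_op 1"
  unfolding generates_cc_def
proof (intro conjI ballI allI impI)
  fix b assume "b \<in> set Psi_op"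
  then consider "b = [0, - opR, opQ]" | "b = [opR, 0, - opP]" | "b = [- opQ, opP, 0]"
    by auto
  then show "rowmul b Phi_op 1 = replicate 1 0"
    by cases (simp_all only: rowmul_Phi, simp_all add: algebra_simps)
next
  fix c assume h: "length c = length Phi_op \<and> rowmul c Phi_op 1 = replicate 1 0"
  then have "length c = 3"
    by simp
  then obtain c0 c1 c2 where c: "c = [c0, c1, c2]"
    using list_length_3_cases by blast
  have "c0 * opP + c1 * opQ + c2 * opR = 0"
    using h unfolding c rowmul_Phi by simp
  then obtain \<alpha> \<beta> s
    where e: "c0 = s * opR - \<alpha> * opQ" "c1 = \<alpha> * opP + \<beta> * opR" "c2 = - (s * opP) - \<beta> * opQ"
    using syzygy_P_Q_R by blast
  show "\<exists>l. length l = length Psi_op \<and> c = rowmul l Psi_op (length Phi_op)"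
    unfolding length_3
    by (rule exI[of _ "[- \<beta>, s, \<alpha>]"]) (simp only: rowmul_Psi c e, simp add: algebra_simps)
qed

lemma generates_cc_Omega_Psi: "generates_cc Omega_op Psi_op 3"
  unfolding generates_cc_def
proof (intro conjI ballI allI impI)
  fix b assume "b \<in> set Omega_op"
  then show "rowmul b Psi_op 3 = replicate 3 0"
    by (simp only: set_simps singleton_iff empty_iff rowmul_Psi, simp add: algebra_simps eval_nat_numeral)
next
  fix c assume h: "length c = length Psi_op \<and> rowmul c Psi_op 3 = replicate 3 0"
  then have "length c = 3"
    by simp
  then obtain c0 c1 c2 where c: "c = [c0, c1, c2]"
    using list_length_3_cases by blast
  have "- (c0 * opR) + c2 * opP = 0" "c0 * opQ - c1 * opP = 0"
    using h unfolding c rowmul_Psi by (simp_all add: eval_nat_numeral)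
  then obtain s where e: "c0 = s * opP" "c1 = s * opQ" "c2 = s * opR"
    using syzygy_Psi by blast
  show "\<exists>l. length l = length Omega_op \<and> c = rowmul l Omega_op (length Psi_op)"
    unfolding length_3 by (rule exI[of _ "[s]"]) (simp only: rowmul_Omega c e, simp)
qed

lemma generates_cc_Nil_Omega: "generates_cc [] Omega_op 3"
  unfolding generates_cc_def
proof (intro conjI ballI allI impI)
  fix c assume h: "length c = length Omega_op \<and> rowmul c Omega_op 3 = replicate 3 0"
  then have "length c = 1"
    by simp
  then obtain c0 where c: "c = [c0]"
    using list_length_1_cases by blast
  have "c0 * opP = 0"
    using h unfolding c rowmul_Omega by (simp add: eval_nat_numeral)
  then have "c0 = 0"
    unfolding opP_def by (rule times_dop_eq_0D)
  then show "\<exists>l. length l = length [] \<and> c = rowmul l [] (length Omega_op)"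
    by (simp add: c rowmul_def)
qed simp

lemma formally_exact_Phi_Psi_Omega: "formally_exact [1, 3, 3, 1, 0] [Phi_op, Psi_op, Omega_op, []]"
  unfolding formally_exact_def
proof (intro conjI allI impI)
  fix i assume "i < length [Phi_op, Psi_op, Omega_op, []]"
  then have "i = 0 \<or> i = 1 \<or> i = 2 \<or> i = 3"
    by auto
  then show "is_matrix ([1, 3, 3, 1, 0] ! Suc i) ([1, 3, 3, 1, 0] ! i) ([Phi_op, Psi_op, Omega_op, []] ! i)"
    by (elim disjE) (simp_all add: is_matrix_def)
next
  fix i assume "Suc i < length [Phi_op, Psi_op, Omega_op, []]"
  then have "i = 0 \<or> i = 1 \<or> i = 2"
    by auto
  then show "generates_cc ([Phi_op, Psi_op, Omega_op, []] ! Suc i) ([Phi_op, Psi_op, Omega_op, []] ! i)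
      ([1, 3, 3, 1, 0] ! i)"
    using generates_cc_Psi_Phi generates_cc_Omega_Psi generates_cc_Nil_Omega by (elim disjE) simp_all
qed simp

theorem mainTheorem8:
  fixes Phi Psi Omega :: "D list list"
  defines "Phi \<equiv> [[opP], [opQ], [opR]]"
      and "Psi \<equiv> [[0, - opR, opQ], [opR, 0, - opP], [- opQ, opP, 0]]"
      and "Omega \<equiv> [[opP, opQ, opR]]"
  shows
    "formally_integrable Phi 1 2
     \<and> \<not> involutive 1 2 (symb Phi 1 2 0)
     \<and> \<not> involutive 1 3 (symb Phi 1 2 1)
     \<and> symb Phi 1 2 2 = {0}
     \<and> fdim (symb Phi 1 2 1) = 1
     \<and> bij_betw spencer (Forms 2 (symb Phi 1 2 1)) (Forms 3 (symb Phi 1 2 0))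
     \<and> fdim (Forms 2 (symb Phi 1 2 1)) = 3
     \<and> fdim (Forms 3 (symb Phi 1 2 0)) = 3
     \<and> acyclic 2 1 3 (symb Phi 1 2 1)
     \<and> generates_cc Psi Phi 1
     \<and> generates_cc Omega Psi 3
     \<and> formally_exact [1, 3, 3, 1, 0] [Phi, Psi, Omega, []]
     \<and> \<not> acyclic 2 3 2 (hsp Phi 1 2 2)
     \<and> hsp Phi 1 2 3 = prol 3 2 (hsp Phi 1 2 2) 1
     \<and> acyclic 2 3 3 (hsp Phi 1 2 3)"
  unfolding assms
  using formally_integrable_homogeneous[OF homogeneous_Phi] not_involutive_g2 not_involutive_g3
    symb_Phi_2 fdim_g3 bij_betw_spencer_g3_g2 fdim_Forms2_g3 fdim_Forms3_g2 acyclic_2_g3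
    generates_cc_Psi_Phi generates_cc_Omega_Psi formally_exact_Phi_Psi_Omega not_acyclic_h2
    h3_eq_prol_h2 acyclic_2_h3
  by blast

end
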